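(* Assume the standing hypotheses (P) and (D') described in the context, let $\epsilon>0$ and $\eta\in(0,\frac\beta2)$. Then there exists $\gamma>0$ such that, almost surely, there exists $\bar n\in\mathbb N$ such that for all $n\ge\bar n$ $$\inf_{\phi\in\mathcal H^{pot}(\epsilon)}\sup_{D\in\mathcal H^{dis}(\epsilon)}\Big(\hat L_n(\nabla\phi,D)+\gamma\hat P^{(\beta/2)}_n(\phi)\Big)=\inf_{\phi\in\mathcal H^{pot}_{\beta/2-\eta}(\epsilon)}\sup_{D\in\mathcal H^{dis}(\epsilon)}\Big(\hat L_n(\nabla\phi,D)+\gamma\hat P^{(\beta/2)}_n(\phi)\Big).$$
   Context: Let $d\in\mathbb N$; $\lambda$ is the restriction of Lebesgue measure to $[0,1]^d$, $G_{\#}\lambda$ the pushforward. $\mu^*$ is a probability measure on $[0,1]^d$ with Lebesgue density $p^*$, $p^*>0$ on $[0,1]^d$, $p^*=0$ outside. On $(\Omega,\mathcal F,\mathbb P)$, $Y,Y_1,Y_2,\dots$ are i.i.d. with law $\mu^*$, $Z,Z_1,Z_2,\dots$ are i.i.d. with law $\lambda$. $L(G,D)=\frac12\mathbb E[\log D(Y)+\log(1-D(G(Z)))]$, $\hat L_n(G,D)=\frac1{2n}\sum_{i=1}^n\log D(Y_i)+\frac1{2n}\sum_{i=1}^n\log(1-D(G(Z_i)))$. If $G_{\#}\lambda$ has density $p$, $D_G=\frac{p^*}{p^*+p}$ on $[0,1]^d$, $D_G=0$ outside. Neural networks with architecture $(l_0,\dots,l_L)$ and activation $\sigma$ realize $x_0\mapsto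 W_Lx_{L-1}+B_L$, $x_k=\sigma(W_kx_{k-1}+B_k)$; ReLU: $\sigma(x)=\max\{x,0\}$, ReCU: $\sigma(x)=\max\{x,0\}^3$. $C^{k,\alpha}$ are Hölder spaces on $[0,1]^d$; $A\ge B$ means $A-B$ positive semidefinite; $d_{JS}$ is the Jensen–Shannon divergence. Hypotheses (P): $p^*\in C^{1,\alpha}([0,1]^d,\mathbb R)$ for some $\alpha\in(0,1)$; $\phi^*\in C^{3,\alpha}([0,1]^d,\mathbb R)$ is the Brenier potential with $\mu^*=(\nabla\phi^* )_{\#}\lambda$; $M\in(1,\infty)$ with $\frac1M\operatorname{Id}\le\operatorname{Hess}\phi^*\le M\operatorname{Id}$ on $[0,1]^d$, and $\beta:=1/M$. For each $\epsilon>0$, $\phi_\epsilon$ is a ReCU network with $\frac1{2M}\operatorname{Id}\le\operatorname{Hess}\phi_\epsilon\le2M\operatorname{Id}$ on $[0,1]^d$ and $d_{JS}(\mu^*,(\nabla\phi_\epsilon)_{\#}\lambda)\le\epsilon$, $\mathcal A^\phi(\epsilon)$ is its architecture, $H(\epsilon)=\|\phi_\epsilon\|_{C^{2,1}}$, $\tilde H(\epsilon)\ge H(\epsilon)$ is fixed, and $\mathcal H^{pot}(\epsilon)$ is the set of all ReCU networks $\phi\colon[0,1]^d\to\mathbb R$ with architecture $\mathcal A^\phi(\epsilon)$ and $\|\phi\|_{C^{2,1}([0,1]^d)}\le\tilde H(\epsilon)$. A function $\phi$ is $\kappa$-strongly convex if $\phi(\frac{u+u'}2)\le\frac{\phi(u)+\phi(u')}2-\frac\kappa8\|u-u'\|^2$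 for all $u,u'\in[0,1]^d$; $\mathcal H^{pot}_\kappa(\epsilon)$ is the set of $\kappa$-strongly convex elements of $\mathcal H^{pot}(\epsilon)$. Hypotheses (D'): for each $\epsilon>0$ there are a ReLU architecture $\mathcal A^D(\epsilon)$ and $D_{\min}(\epsilon)\in(0,1/2)$; $\mathcal H^{dis}(\epsilon)$ is a subset, relatively compact with respect to the supremum norm on $[0,1]^d$, of the set of functions $D\colon\mathbb R^d\to[0,1]$ with $D=0$ outside $[0,1]^d$ and $D|_{[0,1]^d}$ a ReLU network of architecture $\mathcal A^D(\epsilon)$ with values in $[D_{\min}(\epsilon),1-D_{\min}(\epsilon)]$, and for each $\phi\in\mathcal H^{pot}_{\beta/2}(\epsilon)$ it contains a function $D(\nabla\phi)$ of this form with $L(\nabla\phi,D_{\nabla\phi})-L(\nabla\phi,D(\nabla\phi))\le\epsilon$. Penalty: let $m\colon\mathbb N\to\mathbb N$ be increasing with $m(n)\to\infty$, and $U_1,U_2,\dots,U'_1,U'_2,\dots$ independent, uniformly distributed on $[0,1]^d$; $\hat P^{(\kappa)}_n(\phi)=\frac1{m(n)}\sum_{j=1}^{m(n)}\mathrm{ReLU}\big(\phi(\frac{U_j+U'_j}2)-\frac{\phi(U_j)+\phi(U'_j)}2+\frac\kappa8\|U_j-U'_j\|^2\big)$, $\mathrm{ReLU}(x)=\max\{x,0\}$. *)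

theory Defs
  imports "HOL-Analysis.Analysis" "HOL-Probability.Probability"
begin

definition cube :: "(real^'d) set" where
  "cube = {x. \<forall>i. 0 \<le> x $ i \<and> x $ i \<le> 1}"

text \<open>Lebesgue measure restricted to the cube (as measure on the cube), used for push-forwards.\<close>
definition lam_on :: "(real^'d) measure" where
  "lam_on = restrict_space lborel cube"

text \<open>Lebesgue measure restricted to the cube as a measure on R^d (law of the uniform variables).\<close>
definition lam :: "(real^'d) measure" where
  "lam = density lborel (indicator cube)"

definition pushfwd :: "(real^'d \<Rightarrow> real^'d) \<Rightarrow> (real^'d) measure" where
  "pushfwd G = distr lam_on borel G"

definition has_pd :: "'d \<Rightarrow> (real^'d \<Rightarrow> real) \<Rightarrow> real^'d \<Rightarrow> real \<Rightarrow> bool" where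
  "has_pd i g x c \<longleftrightarrow>
     ((\<lambda>t. g (x + t *\<^sub>R axis i 1)) has_real_derivative c)
       (at 0 within {t. x + t *\<^sub>R axis i 1 \<in> cube})"

definition pdi :: "'d \<Rightarrow> (real^'d \<Rightarrow> real) \<Rightarrow> real^'d \<Rightarrow> real" where
  "pdi i g x = (SOME c. has_pd i g x c)"

fun pdl :: "'d list \<Rightarrow> (real^'d \<Rightarrow> real) \<Rightarrow> real^'d \<Rightarrow> real" where
  "pdl [] g = g"
| "pdl (i # is) g = pdi i (pdl is g)"

definition Ck :: "nat \<Rightarrow> (real^'d \<Rightarrow> real) \<Rightarrow> bool" where
  "Ck k g \<longleftrightarrow> (\<forall>is :: 'd list. length is \<le> k \<longrightarrow>
      continuous_on cube (pdl is g) \<and>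
      (\<forall>j js. is = j # js \<longrightarrow> (\<forall>x\<in>cube. \<exists>c. has_pd j (pdl js g) x c)))"

definition holder_semi :: "real \<Rightarrow> (real^'d \<Rightarrow> real) \<Rightarrow> ennreal" where
  "holder_semi \<alpha> g = (SUP xy \<in> {(x, y). x \<in> cube \<and> y \<in> cube \<and> x \<noteq> y}.
      ennreal (\<bar>g (fst xy) - g (snd xy)\<bar> / dist (fst xy) (snd xy) powr \<alpha>))"

definition Ck_alpha :: "nat \<Rightarrow> real \<Rightarrow> (real^'d \<Rightarrow> real) \<Rightarrow> bool" where
  "Ck_alpha k \<alpha> g \<longleftrightarrow> Ck k g \<and>
     (\<forall>is :: 'd list. length is = k \<longrightarrow> holder_semi \<alpha> (pdl is g) < \<infinity>)"

text \<open>Hoelder norm ||g||_{C^{k,alpha}([0,1]^d)} (max-over-multi-indices convention), in [0,\<infinity>].\<close>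
definition ck_norm :: "nat \<Rightarrow> real \<Rightarrow> (real^'d \<Rightarrow> real) \<Rightarrow> ennreal" where
  "ck_norm k \<alpha> g =
     (SUP is \<in> {is :: 'd list. length is \<le> k}. SUP x \<in> cube. ennreal \<bar>pdl is g x\<bar>)
   + (SUP is \<in> {is :: 'd list. length is = k}. holder_semi \<alpha> (pdl is g))"

definition grad :: "(real^'d \<Rightarrow> real) \<Rightarrow> real^'d \<Rightarrow> real^'d" where
  "grad g x = (\<chi> i. pdi i g x)"

definition hess :: "(real^'d \<Rightarrow> real) \<Rightarrow> real^'d \<Rightarrow> real^'d^'d" where
  "hess g x = (\<chi> i j. pdl [i, j] g x)"

definition hess_between :: "real \<Rightarrow> real \<Rightarrow> (real^'d \<Rightarrow> real) \<Rightarrow> bool" where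
  "hess_between a b g \<longleftrightarrow> (\<forall>x\<in>cube. \<forall>v :: real^'d.
      a * (v \<bullet> v) \<le> v \<bullet> (hess g x *v v) \<and> v \<bullet> (hess g x *v v) \<le> b * (v \<bullet> v))"

definition strongly_convex :: "real \<Rightarrow> (real^'d \<Rightarrow> real) \<Rightarrow> bool" where
  "strongly_convex \<kappa> \<phi> \<longleftrightarrow> (\<forall>u\<in>cube. \<forall>u'\<in>cube.
      \<phi> ((1/2) *\<^sub>R (u + u')) \<le> (\<phi> u + \<phi> u') / 2 - \<kappa> / 8 * (norm (u - u'))\<^sup>2)"

type_synonym nn_params = "((nat \<Rightarrow> nat \<Rightarrow> real) \<times> (nat \<Rightarrow> real)) list"

definition aff :: "nat \<Rightarrow> (nat \<Rightarrow> nat \<Rightarrow> real) \<Rightarrow> (nat \<Rightarrow> real) \<Rightarrow> (nat \<Rightarrow> real) \<Rightarrow> nat \<Rightarrow> real" where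
  "aff n W B x = (\<lambda>i. (\<Sum>j<n. W i j * x j) + B i)"

text \<open>Realization for architecture (l_0,...,l_L) and parameters [(W_1,B_1),...,(W_L,B_L)]:
  x_k = sigma(W_k x_{k-1} + B_k) for k < L, output W_L x_{L-1} + B_L.\<close>
fun nn_eval :: "(real \<Rightarrow> real) \<Rightarrow> nat list \<Rightarrow> nn_params \<Rightarrow> (nat \<Rightarrow> real) \<Rightarrow> nat \<Rightarrow> real" where
  "nn_eval \<sigma> [n0, n1] [(W, B)] x = aff n0 W B x"
| "nn_eval \<sigma> (n0 # n1 # n2 # ns) ((W, B) # ps) x =
     nn_eval \<sigma> (n1 # n2 # ns) ps (\<lambda>i. \<sigma> (aff n0 W B x i))"
| "nn_eval \<sigma> _ _ x = (\<lambda>_. 0)"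

definition coord_idx :: "nat \<Rightarrow> 'd::finite" where
  "coord_idx = (SOME f. bij_betw f {..<CARD('d)} (UNIV :: 'd set))"

definition coords :: "real^'d \<Rightarrow> nat \<Rightarrow> real" where
  "coords u = (\<lambda>i. if i < CARD('d) then u $ coord_idx i else 0)"

definition realize :: "(real \<Rightarrow> real) \<Rightarrow> nat list \<Rightarrow> nn_params \<Rightarrow> real^'d \<Rightarrow> real" where
  "realize \<sigma> A ps u = nn_eval \<sigma> A ps (coords u) 0"

definition valid_arch :: "nat list \<Rightarrow> bool" where
  "valid_arch A \<longleftrightarrow> 2 \<le> length A \<and> last A = 1"

definition is_network_on :: "(real^'d) set \<Rightarrow> (real \<Rightarrow> real) \<Rightarrow> nat list \<Rightarrow> (real^'d \<Rightarrow> real) \<Rightarrow> bool" where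
  "is_network_on S \<sigma> A f \<longleftrightarrow> valid_arch A \<and> hd A = CARD('d) \<and>
     (\<exists>ps. length ps + 1 = length A \<and> (\<forall>u\<in>S. f u = realize \<sigma> A ps u))"

definition relu :: "real \<Rightarrow> real" where
  "relu x = max x 0"

definition recu :: "real \<Rightarrow> real" where
  "recu x = (max x 0) ^ 3"

definition mix_measure :: "(real^'d) measure \<Rightarrow> (real^'d) measure \<Rightarrow> (real^'d) measure" where
  "mix_measure P Q = measure_of UNIV (sets borel) (\<lambda>A. (emeasure P A + emeasure Q A) / 2)"

text \<open>Jensen--Shannon divergence (natural logarithm). KL_divergence b M N is KL(N || M).\<close>
definition d_JS :: "(real^'d) measure \<Rightarrow> (real^'d) measure \<Rightarrow> real" where
  "d_JS P Q = KL_divergence (exp 1) (mix_measure P Q) P / 2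
            + KL_divergence (exp 1) (mix_measure P Q) Q / 2"

definition L_gan :: "(real^'d) measure \<Rightarrow> (real^'d \<Rightarrow> real^'d) \<Rightarrow> (real^'d \<Rightarrow> real) \<Rightarrow> real" where
  "L_gan mu G D = ((\<integral>y. ln (D y) \<partial>mu) + (\<integral>z. ln (1 - D (G z)) \<partial>lam_on)) / 2"

text \<open>Optimal discriminant D_G for densities p* and p (density of G_# lambda).\<close>
definition D_opt :: "(real^'d \<Rightarrow> real) \<Rightarrow> (real^'d \<Rightarrow> real) \<Rightarrow> real^'d \<Rightarrow> real" where
  "D_opt pstar p x = (if x \<in> cube then pstar x / (pstar x + p x) else 0)"

definition L_hat :: "(nat \<Rightarrow> 'w \<Rightarrow> real^'d) \<Rightarrow> (nat \<Rightarrow> 'w \<Rightarrow> real^'d) \<Rightarrow> nat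
     \<Rightarrow> (real^'d \<Rightarrow> real^'d) \<Rightarrow> (real^'d \<Rightarrow> real) \<Rightarrow> 'w \<Rightarrow> real" where
  "L_hat Y Z n G D \<omega> = 1 / (2 * real n) * (\<Sum>i=1..n. ln (D (Y i \<omega>)))
                     + 1 / (2 * real n) * (\<Sum>i=1..n. ln (1 - D (G (Z i \<omega>))))"

definition P_hat :: "(nat \<Rightarrow> nat) \<Rightarrow> (nat \<Rightarrow> 'w \<Rightarrow> real^'d) \<Rightarrow> (nat \<Rightarrow> 'w \<Rightarrow> real^'d) \<Rightarrow> real
     \<Rightarrow> nat \<Rightarrow> (real^'d \<Rightarrow> real) \<Rightarrow> 'w \<Rightarrow> real" where
  "P_hat m U U' \<kappa> n \<phi> \<omega> = 1 / real (m n) * (\<Sum>j=1..m n.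
      relu (\<phi> ((1/2) *\<^sub>R (U j \<omega> + U' j \<omega>)) - (\<phi> (U j \<omega>) + \<phi> (U' j \<omega>)) / 2
            + \<kappa> / 8 * (norm (U j \<omega> - U' j \<omega>))\<^sup>2))"

definition H_pot :: "nat list \<Rightarrow> real \<Rightarrow> (real^'d \<Rightarrow> real) set" where
  "H_pot A Ht = {\<phi>. is_network_on UNIV recu A \<phi> \<and> ck_norm 2 1 \<phi> \<le> ennreal Ht}"

definition H_pot_sc :: "real \<Rightarrow> nat list \<Rightarrow> real \<Rightarrow> (real^'d \<Rightarrow> real) set" where
  "H_pot_sc \<kappa> A Ht = {\<phi> \<in> H_pot A Ht. strongly_convex \<kappa> \<phi>}"

definition dis_class :: "nat list \<Rightarrow> real \<Rightarrow> (real^'d \<Rightarrow> real) set" where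
  "dis_class A Dmin = {D. (\<forall>u. 0 \<le> D u \<and> D u \<le> 1) \<and> (\<forall>u. u \<notin> cube \<longrightarrow> D u = 0)
      \<and> is_network_on cube relu A D \<and> (\<forall>u\<in>cube. Dmin \<le> D u \<and> D u \<le> 1 - Dmin)}"

definition rel_compact_sup :: "(real^'d \<Rightarrow> real) set \<Rightarrow> bool" where
  "rel_compact_sup H \<longleftrightarrow> (\<forall>D :: nat \<Rightarrow> real^'d \<Rightarrow> real. (\<forall>k. D k \<in> H) \<longrightarrow>
      (\<exists>r g. strict_mono r \<and> uniform_limit cube (\<lambda>k. D (r k)) g sequentially))"

end

theory Submission
  imports Defs
begin

(*
  Write P for the empirical penalty with parameter beta/2 and kappa = beta/2 - eta.  The penalty
  vanishes on (beta/2)-strongly convex potentials, in particular on phi_eps, which lies in the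
  smaller class; the loss L_hat always lies in [ln Dmin, 0].  So it suffices to find gamma with
  gamma * P(phi) >= - ln Dmin for every potential phi of the larger class that is not
  kappa-strongly convex: such phi are then dominated by phi_eps.

  Potentials in H_pot have second derivatives bounded and Lipschitz with constant controlled by
  the C^{2,1} bound.  If phi is not kappa-strongly convex, the Hessian form is below kappa in some
  direction v at some point xi, and a second order Taylor expansion at chord midpoints shows that
  the (beta/2)-convexity defect is at least a fixed c > 0 for all chords from a grid cell A near xi
  to a grid cell B near xi + v, where the grid mesh 1/N depends only on the class.  By Hoeffding's
  inequality and Borel-Cantelli, almost surely for all large n more than half of the expected
  fraction |A| |B| = N^(-2d) of the pairs (U_j, U'_j) falls into every such A x B, so
  P(phi) >= c N^(-2d) / 2, and gamma = (1 + |ln Dmin|) / (c N^(-2d) / 2) works.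
*)

section \<open>ReCU networks are twice differentiable\<close>

lemma DERIV_max0_power:
  fixes k :: nat and x :: real
  assumes "k \<ge> 1"
  shows "((\<lambda>x. (max x 0) ^ Suc k) has_real_derivative real (Suc k) * (max x 0) ^ k) (at x)"
proof (cases x "0::real" rule: linorder_cases)
  case less
  have "((\<lambda>x. 0) has_real_derivative real (Suc k) * (max x 0) ^ k) (at x)"
    using less assms by (simp add: power_0_left)
  then show ?thesis
    by (rule has_field_derivative_transform_within_open[where S="{..<0}"])
       (use less assms in auto)
next
  case greater
  have "((\<lambda>x. x ^ Suc k) has_real_derivative real (Suc k) * (max x 0) ^ k) (at x)"
    using DERIV_pow[of "Suc k" x] greater by simp
  then show ?thesis
    by (rule has_field_derivative_transform_within_open[where S="{0<..}"]) (use greater in auto)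
next
  case equal
  have "\<forall>\<^sub>F y in at_right 0. (max y 0) ^ Suc k / y = (y::real) ^ k"
    by (auto simp: eventually_at_right_field intro: exI[of _ 1])
  moreover have "((\<lambda>y::real. y ^ k) \<longlongrightarrow> 0) (at_right 0)"
    using assms by (auto intro!: tendsto_eq_intros simp: power_0_left)
  ultimately have right: "((\<lambda>y. (max y 0) ^ Suc k / y) \<longlongrightarrow> 0) (at_right (0::real))"
    by (simp add: tendsto_cong)
  have left: "((\<lambda>y. (max y 0) ^ Suc k / y) \<longlongrightarrow> 0) (at_left (0::real))"
    by (rule Lim_transform_eventually[of "\<lambda>_. 0"])
       (auto simp: eventually_at_left_field intro: exI[of _ "-1"])
  show ?thesis
    using equal assms filterlim_at_split[THEN iffD2, OF conjI[OF left right]]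
    by (simp add: has_field_derivative_iff power_0_left)
qed

lemma recu_has_real_derivative: "(recu has_real_derivative 3 * (max s 0)^2) (at s)"
  using DERIV_max0_power[of 2 s] unfolding recu_def by (simp add: numeral_eq_Suc)

lemma recu_derivative_has_real_derivative:
  "((\<lambda>s. 3 * (max s 0)^2) has_real_derivative 6 * max s 0) (at s)"
  using DERIV_cmult[OF DERIV_max0_power[of 1 s], of 3] by (simp add: numeral_eq_Suc)

definition twice_differentiable_with ::
    "(real^'d \<Rightarrow> real) \<Rightarrow> (real^'d \<Rightarrow> 'd \<Rightarrow> real) \<Rightarrow> (real^'d \<Rightarrow> 'd \<Rightarrow> 'd \<Rightarrow> real) \<Rightarrow> bool" where
  "twice_differentiable_with f f' f'' \<longleftrightarrow> (\<forall>x.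
      (f has_derivative (\<lambda>h. \<Sum>i\<in>UNIV. h$i * f' x i)) (at x) \<and>
      (\<forall>i. ((\<lambda>y. f' y i) has_derivative (\<lambda>h. \<Sum>j\<in>UNIV. h$j * f'' x i j)) (at x)))"

definition twice_differentiable :: "(real^'d \<Rightarrow> real) \<Rightarrow> bool" where
  "twice_differentiable f \<longleftrightarrow> (\<exists>f' f''. twice_differentiable_with f f' f'')"

lemma twice_differentiable_const: "twice_differentiable (\<lambda>x. c)"
proof -
  have "twice_differentiable_with (\<lambda>x. c) (\<lambda>x i. 0) (\<lambda>x i j. 0)"
    unfolding twice_differentiable_with_def
    by (auto intro: has_derivative_eq_rhs[OF has_derivative_const])
  then show ?thesis unfolding twice_differentiable_def by blast
qed

lemma twice_differentiable_component:
  fixes k :: "'d::finite"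
  shows "twice_differentiable (\<lambda>x::real^'d. x $ k)"
proof -
  have "((\<lambda>x::real^'d. x $ k) has_derivative
      (\<lambda>h. \<Sum>i\<in>UNIV. h $ i * (if i = k then 1 else 0))) (at x)" for x
    using bounded_linear.has_derivative
        [OF bounded_linear_vec_nth[of k] has_derivative_ident[of "at x"]]
    by (simp add: if_distrib cong: if_cong)
  then have "twice_differentiable_with (\<lambda>x. x $ k) (\<lambda>x i. if i = k then 1 else 0) (\<lambda>x i j. 0)"
    unfolding twice_differentiable_with_def by (auto simp: has_derivative_const)
  then show ?thesis unfolding twice_differentiable_def by blast
qed

lemma twice_differentiable_add:
  assumes "twice_differentiable f" "twice_differentiable g"
  shows "twice_differentiable (\<lambda>x. f x + g x)"
proof -
  obtain f' f'' g' g''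
    where "twice_differentiable_with f f' f''" "twice_differentiable_with g g' g''"
    using assms unfolding twice_differentiable_def by blast
  then have "twice_differentiable_with (\<lambda>x. f x + g x) (\<lambda>x i. f' x i + g' x i)
      (\<lambda>x i j. f'' x i j + g'' x i j)"
    unfolding twice_differentiable_with_def
    by (auto dest: has_derivative_add simp: distrib_left sum.distrib)
  then show ?thesis unfolding twice_differentiable_def by blast
qed

lemma twice_differentiable_cmult:
  assumes "twice_differentiable f"
  shows "twice_differentiable (\<lambda>x. c * f x)"
proof -
  obtain f' f'' where f: "twice_differentiable_with f f' f''"
    using assms unfolding twice_differentiable_def by blast
  have "twice_differentiable_with (\<lambda>x. c * f x) (\<lambda>x i. c * f' x i) (\<lambda>x i j. c * f'' x i j)"
    unfolding twice_differentiable_with_def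
  proof (intro allI conjI)
    fix x i
    have "(f has_derivative (\<lambda>h. \<Sum>i\<in>UNIV. h$i * f' x i)) (at x)"
      and "((\<lambda>y. f' y i) has_derivative (\<lambda>h. \<Sum>j\<in>UNIV. h$j * f'' x i j)) (at x)"
      using f unfolding twice_differentiable_with_def by blast+
    from this[THEN has_derivative_mult_right[of _ _ _ c]]
    show "((\<lambda>x. c * f x) has_derivative (\<lambda>h. \<Sum>i\<in>UNIV. h $ i * (c * f' x i))) (at x)"
      and "((\<lambda>y. c * f' y i) has_derivative (\<lambda>h. \<Sum>j\<in>UNIV. h $ j * (c * f'' x i j))) (at x)"
      by (simp_all add: sum_distrib_left mult_ac)
  qed
  then show ?thesis unfolding twice_differentiable_def by blast
qed

lemma twice_differentiable_sum:
  assumes "\<And>j. j \<in> S \<Longrightarrow> twice_differentiable (f j)"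
  shows "twice_differentiable (\<lambda>x. \<Sum>j\<in>S. f j x)"
  using assms
  by (induction S rule: infinite_finite_induct)
     (simp_all add: twice_differentiable_const twice_differentiable_add)

lemma twice_differentiable_compose:
  assumes f: "twice_differentiable f"
    and g': "\<And>s. (g has_real_derivative g' s) (at s)"
    and g'': "\<And>s. (g' has_real_derivative g'' s) (at s)"
  shows "twice_differentiable (\<lambda>x. g (f x))"
proof -
  obtain f' f'' where f: "twice_differentiable_with f f' f''"
    using f unfolding twice_differentiable_def by blast
  have "twice_differentiable_with (\<lambda>x. g (f x)) (\<lambda>x i. g' (f x) * f' x i)
          (\<lambda>x i j. g'' (f x) * f' x j * f' x i + g' (f x) * f'' x i j)"
    unfolding twice_differentiable_with_def
  proof (intro allI conjI)
    fix x i
    have df: "(f has_derivative (\<lambda>h. \<Sum>i\<in>UNIV. h$i * f' x i)) (at x)"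
      and df': "((\<lambda>y. f' y i) has_derivative (\<lambda>h. \<Sum>j\<in>UNIV. h$j * f'' x i j)) (at x)"
      using f unfolding twice_differentiable_with_def by blast+
    have "((\<lambda>x. g (f x)) has_derivative (\<lambda>h. g' (f x) * (\<Sum>i\<in>UNIV. h$i * f' x i))) (at x)"
      using has_derivative_compose[OF df g'[unfolded has_field_derivative_def]] .
    then show "((\<lambda>x. g (f x)) has_derivative (\<lambda>h. \<Sum>i\<in>UNIV. h $ i * (g' (f x) * f' x i))) (at x)"
      by (simp add: sum_distrib_left mult_ac)
    have "((\<lambda>y. g' (f y)) has_derivative (\<lambda>h. g'' (f x) * (\<Sum>i\<in>UNIV. h$i * f' x i))) (at x)"
      using has_derivative_compose[OF df g''[unfolded has_field_derivative_def]] .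
    from has_derivative_mult[OF this df']
    show "((\<lambda>y. g' (f y) * f' y i) has_derivative
        (\<lambda>h. \<Sum>j\<in>UNIV. h $ j * (g'' (f x) * f' x j * f' x i + g' (f x) * f'' x i j))) (at x)"
      by (simp add: sum_distrib_left sum_distrib_right sum.distrib distrib_left mult_ac add.commute)
  qed
  then show ?thesis unfolding twice_differentiable_def by blast
qed

context
  fixes \<sigma> \<sigma>' \<sigma>'' :: "real \<Rightarrow> real"
  assumes \<sigma>': "\<And>s. (\<sigma> has_real_derivative \<sigma>' s) (at s)"
    and \<sigma>'': "\<And>s. (\<sigma>' has_real_derivative \<sigma>'' s) (at s)"
begin

lemma twice_differentiable_nn_eval:
  assumes "\<And>j. twice_differentiable (\<lambda>u. X u j)"
  shows "twice_differentiable (\<lambda>u. nn_eval \<sigma> A ps (X u) i)"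
  using assms
proof (induction ps arbitrary: A X i)
  case Nil
  have "nn_eval \<sigma> A [] x = (\<lambda>_. 0)" for x
    by (cases "(\<sigma>, A, [] :: nn_params, x)" rule: nn_eval.cases) auto
  then show ?case by (simp add: twice_differentiable_const)
next
  case (Cons p ps)
  obtain W B where p: "p = (W, B)" by fastforce
  have affine: "twice_differentiable (\<lambda>u. aff n W B (X u) i)" for n i
    unfolding aff_def using Cons.prems
    by (intro twice_differentiable_add twice_differentiable_sum twice_differentiable_cmult
        twice_differentiable_const)
  consider "A = []" | n0 where "A = [n0]" | n0 n1 where "A = [n0, n1]"
    | n0 n1 n2 ns where "A = n0 # n1 # n2 # ns"
    by (metis list.exhaust)
  then show ?case
  proof cases
    case 3
    then show ?thesis using p affine
      by (cases ps) (simp_all add: twice_differentiable_const)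
  next
    case 4
    have "twice_differentiable (\<lambda>u. nn_eval \<sigma> (n1 # n2 # ns) ps (\<lambda>i. \<sigma> (aff n0 W B (X u) i)) i)"
      by (rule Cons.IH) (intro twice_differentiable_compose[OF affine \<sigma>' \<sigma>''])
    then show ?thesis using 4 p by simp
  qed (simp_all add: twice_differentiable_const)
qed

lemma twice_differentiable_network:
  fixes \<phi> :: "real^'d::finite \<Rightarrow> real"
  assumes "is_network_on UNIV \<sigma> A \<phi>"
  shows "twice_differentiable \<phi>"
proof -
  obtain ps where "\<phi> = (\<lambda>u. nn_eval \<sigma> A ps (coords u) 0)"
    using assms unfolding is_network_on_def realize_def by auto
  moreover have "twice_differentiable (\<lambda>u::real^'d. coords u j)" for j
    unfolding coords_def
    by (cases "j < CARD('d)")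
       (simp_all add: twice_differentiable_component twice_differentiable_const)
  ultimately show ?thesis by (simp add: twice_differentiable_nn_eval)
qed

end

lemmas twice_differentiable_recu_network =
  twice_differentiable_network[OF recu_has_real_derivative recu_derivative_has_real_derivative]

section \<open>Partial derivatives on the closed cube\<close>

lemma cube_eq_cbox: "cube = cbox (0::real^'d::finite) 1"
  by (auto simp: cube_def mem_box_cart)

lemma segment_in_cube:
  fixes u :: "real^'d::finite"
  assumes "u \<in> cube" "u' \<in> cube" "0 \<le> s" "s \<le> 1"
  shows "u + s *\<^sub>R (u' - u) \<in> cube"
proof -
  have "(1 - s) *\<^sub>R u + s *\<^sub>R u' \<in> cube"
    using convexD_alt[of cube] assms by (simp add: cube_eq_cbox)
  then show ?thesis by (simp add: algebra_simps)
qed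

lemma cube_axis_line:
  fixes x :: "real^'d::finite"
  assumes "x \<in> cube"
  shows "{t. x + t *\<^sub>R axis i 1 \<in> cube} = cbox (- x$i) (1 - x$i)"
  using assms unfolding cube_def by (auto simp: axis_def)

lemma pdi_eqI:
  fixes x :: "real^'d::finite"
  assumes x: "x \<in> cube" and h: "has_pd i g x c"
  shows "pdi i g x = c"
proof -
  have "c' = c" if "has_pd i g x c'" for c'
  proof -
    have "(0::real) \<in> cbox (- x$i) (1 - x$i)" using x unfolding cube_def by auto
    then show ?thesis
      using h that vector_derivative_unique_within_closed_interval[of "- x$i" "1 - x$i" 0]
      unfolding has_pd_def cube_axis_line[OF x] has_real_derivative_iff_has_vector_derivative
      by fastforce
  qed
  then show ?thesis unfolding pdi_def using h by (metis someI)
qed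

lemma has_real_derivative_along_line:
  fixes g :: "real^'d::finite \<Rightarrow> real"
  assumes "(g has_derivative (\<lambda>h. \<Sum>k\<in>UNIV. h$k * g' k)) (at (u + t *\<^sub>R w))"
  shows "((\<lambda>s. g (u + s *\<^sub>R w)) has_real_derivative (\<Sum>k\<in>UNIV. w$k * g' k)) (at t)"
proof -
  have "((\<lambda>s. u + s *\<^sub>R w) has_derivative (\<lambda>s. s *\<^sub>R w)) (at t)"
    by (auto intro!: derivative_eq_intros)
  from has_derivative_compose[OF this assms]
  have "((\<lambda>s. g (u + s *\<^sub>R w)) has_derivative (\<lambda>s. \<Sum>k\<in>UNIV. (s *\<^sub>R w)$k * g' k)) (at t)"
    by simp
  moreover have "(\<lambda>s. \<Sum>k\<in>UNIV. (s *\<^sub>R w)$k * g' k) = (*) (\<Sum>k\<in>UNIV. w$k * g' k)"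
    by (rule ext) (simp add: sum_distrib_left mult_ac)
  ultimately show ?thesis unfolding has_field_derivative_def by simp
qed

lemma has_pd_twice_differentiable_with:
  fixes f :: "real^'d::finite \<Rightarrow> real"
  assumes "twice_differentiable_with f f' f''"
  shows "has_pd i f x (f' x i)" "has_pd i (\<lambda>y. f' y j) x (f'' x j i)"
proof -
  have axis: "(\<Sum>k\<in>UNIV. axis i 1 $ k * c k) = c i" for c :: "'d \<Rightarrow> real"
  proof -
    have "(\<Sum>k\<in>UNIV. axis i 1 $ k * c k) = (\<Sum>k\<in>UNIV. if k = i then c k else 0)"
      by (intro sum.cong) (auto simp: axis_def)
    then show ?thesis by simp
  qed
  have "((\<lambda>s. f (x + s *\<^sub>R axis i 1)) has_real_derivative f' x i) (at 0)"
    using has_real_derivative_along_line[of f "f' x" x 0 "axis i 1"] assms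
    unfolding twice_differentiable_with_def axis by simp
  then show "has_pd i f x (f' x i)"
    unfolding has_pd_def by (rule has_field_derivative_at_within)
  have "((\<lambda>s. f' (x + s *\<^sub>R axis i 1) j) has_real_derivative f'' x j i) (at 0)"
    using has_real_derivative_along_line[of "\<lambda>y. f' y j" "f'' x j" x 0 "axis i 1"] assms
    unfolding twice_differentiable_with_def axis by simp
  then show "has_pd i (\<lambda>y. f' y j) x (f'' x j i)"
    unfolding has_pd_def by (rule has_field_derivative_at_within)
qed

lemma pdl_twice_differentiable_with:
  fixes x :: "real^'d::finite"
  assumes f: "twice_differentiable_with f f' f''" and x: "x \<in> cube"
  shows "pdl [i, j] f x = f'' x j i"
proof -
  have "pdi j f y = f' y j" if "y \<in> cube" for y
    by (rule pdi_eqI[OF that has_pd_twice_differentiable_with(1)[OF f]])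
  then have "has_pd i (pdi j f) x (f'' x j i)"
    using has_pd_twice_differentiable_with(2)[OF f, where i=i and x=x and j=j] x
    unfolding has_pd_def
    by (elim has_field_derivative_transform_within[where d=1]) auto
  then show ?thesis using pdi_eqI[OF x] by simp
qed

section \<open>Midpoint Taylor expansion and strong convexity\<close>

lemma midpoint_taylor:
  fixes g g' g'' :: "real \<Rightarrow> real"
  assumes g': "\<And>t. (g has_real_derivative g' t) (at t)"
    and g'': "\<And>t. (g' has_real_derivative g'' t) (at t)"
  obtains t1 t2 where "0 < t1" "t1 < 1/2" "1/2 < t2" "t2 < 1"
    "g (1/2) - (g 0 + g 1) / 2 = - (g'' t1 + g'' t2) / 16"
proof -
  define diff where "diff = (\<lambda>m::nat. if m = 0 then g else if m = 1 then g' else g'')"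
  have D: "\<forall>m t. m < 2 \<and> 0 \<le> t \<and> t \<le> 1 \<longrightarrow> DERIV (diff m) t :> diff (Suc m) t"
    using g' g'' unfolding diff_def by (auto simp: less_2_cases_iff)
  obtain t2 where t2: "1/2 < t2" "t2 < 1"
    "g 1 = (\<Sum>m<2. diff m (1/2) / fact m * (1 - 1/2)^m) + diff 2 t2 / fact 2 * (1 - 1/2)^2"
    using Taylor_up[of 2 diff g 0 1 "1/2"] D by (auto simp: diff_def)
  obtain t1 where t1: "0 < t1" "t1 < 1/2"
    "g 0 = (\<Sum>m<2. diff m (1/2) / fact m * (0 - 1/2)^m) + diff 2 t1 / fact 2 * (0 - 1/2)^2"
    using Taylor_down[of 2 diff g 0 1 "1/2"] D by (auto simp: diff_def)
  have "g 1 = g (1/2) + g' (1/2) / 2 + g'' t2 / 8" "g 0 = g (1/2) - g' (1/2) / 2 + g'' t1 / 8"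
    using t1(3) t2(3) by (simp_all add: diff_def numeral_2_eq_2)
  then show ?thesis using that t1(1,2) t2(1,2) by (simp add: field_simps)
qed

definition hess_form :: "(real^'d \<Rightarrow> real) \<Rightarrow> real^'d \<Rightarrow> real^'d \<Rightarrow> real" where
  "hess_form \<phi> x w = (\<Sum>i\<in>UNIV. \<Sum>j\<in>UNIV. w$i * w$j * pdl [i, j] \<phi> x)"

lemma inner_hess_eq_hess_form: "w \<bullet> (hess \<phi> x *v w) = hess_form \<phi> x w"
  unfolding hess_form_def hess_def inner_vec_def matrix_vector_mult_def
  by (simp add: sum_distrib_left mult_ac)

definition convexity_defect :: "real \<Rightarrow> (real^'d \<Rightarrow> real) \<Rightarrow> real^'d \<Rightarrow> real^'d \<Rightarrow> real" where
  "convexity_defect \<kappa> \<phi> u u' =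
     \<phi> ((1/2) *\<^sub>R (u + u')) - (\<phi> u + \<phi> u') / 2 + \<kappa> / 8 * (norm (u - u'))\<^sup>2"

lemma strongly_convex_iff_convexity_defect:
  "strongly_convex \<kappa> \<phi> \<longleftrightarrow> (\<forall>u\<in>cube. \<forall>u'\<in>cube. convexity_defect \<kappa> \<phi> u u' \<le> 0)"
  unfolding strongly_convex_def convexity_defect_def by (auto simp: algebra_simps)

lemma strongly_convex_mono:
  assumes "strongly_convex \<kappa> \<phi>" "\<kappa>' \<le> \<kappa>"
  shows "strongly_convex \<kappa>' \<phi>"
proof -
  have "convexity_defect \<kappa>' \<phi> u u' \<le> convexity_defect \<kappa> \<phi> u u'" for u u'
    unfolding convexity_defect_def using assms(2) by (simp add: mult_right_mono)
  then show ?thesis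
    using assms(1) unfolding strongly_convex_iff_convexity_defect by (meson order_trans)
qed

lemma convexity_defect_taylor:
  fixes \<phi> :: "real^'d::finite \<Rightarrow> real"
  assumes \<phi>: "twice_differentiable \<phi>" and u: "u \<in> cube" and u': "u' \<in> cube"
  obtains s1 s2 where "0 \<le> s1" "s1 \<le> 1" "0 \<le> s2" "s2 \<le> 1"
    "convexity_defect \<kappa> \<phi> u u' = \<kappa> / 8 * (norm (u' - u))\<^sup>2
       - (hess_form \<phi> (u + s1 *\<^sub>R (u' - u)) (u' - u)
          + hess_form \<phi> (u + s2 *\<^sub>R (u' - u)) (u' - u)) / 16"
proof -
  obtain f' f'' where f: "twice_differentiable_with \<phi> f' f''"
    using \<phi> unfolding twice_differentiable_def by blast
  define w where "w = u' - u"
  let ?g = "\<lambda>t. \<phi> (u + t *\<^sub>R w)"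
  let ?g' = "\<lambda>t. \<Sum>k\<in>UNIV. w$k * f' (u + t *\<^sub>R w) k"
  let ?g'' = "\<lambda>t. \<Sum>k\<in>UNIV. w$k * (\<Sum>j\<in>UNIV. w$j * f'' (u + t *\<^sub>R w) k j)"
  have "(?g has_real_derivative ?g' t) (at t)" for t
    by (rule has_real_derivative_along_line) (use f in \<open>simp add: twice_differentiable_with_def\<close>)
  moreover have "(?g' has_real_derivative ?g'' t) (at t)" for t
    by (intro DERIV_sum DERIV_cmult has_real_derivative_along_line[where g="\<lambda>y. f' y _"])
       (use f in \<open>simp add: twice_differentiable_with_def\<close>)
  ultimately obtain t1 t2 where t: "0 < t1" "t1 < 1/2" "1/2 < t2" "t2 < 1"
    and eq: "?g (1/2) - (?g 0 + ?g 1) / 2 = - (?g'' t1 + ?g'' t2) / 16"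
    by (rule midpoint_taylor)
  have hess: "?g'' t = hess_form \<phi> (u + t *\<^sub>R w) w" if "0 \<le> t" "t \<le> 1" for t
  proof -
    have "u + t *\<^sub>R w \<in> cube" using segment_in_cube[OF u u' that] by (simp add: w_def)
    then show ?thesis
      unfolding hess_form_def pdl_twice_differentiable_with[OF f \<open>u + t *\<^sub>R w \<in> cube\<close>]
      by (subst sum.swap) (simp add: sum_distrib_left mult_ac)
  qed
  have "(1/2) *\<^sub>R (u + u') = u + (1/2) *\<^sub>R w"
    by (simp add: w_def vec_eq_iff algebra_simps)
  then have "convexity_defect \<kappa> \<phi> u u' = \<kappa> / 8 * (norm w)\<^sup>2 + (?g (1/2) - (?g 0 + ?g 1) / 2)"
    by (simp add: convexity_defect_def w_def norm_minus_commute)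
  also have "\<dots> = \<kappa> / 8 * (norm w)\<^sup>2 - (?g'' t1 + ?g'' t2) / 16"
    using eq by argo
  finally have "convexity_defect \<kappa> \<phi> u u' = \<kappa> / 8 * (norm w)\<^sup>2 - (?g'' t1 + ?g'' t2) / 16" .
  moreover have "?g'' t1 = hess_form \<phi> (u + t1 *\<^sub>R w) w" "?g'' t2 = hess_form \<phi> (u + t2 *\<^sub>R w) w"
    using hess t by auto
  ultimately show ?thesis
    using t by (intro that[of t1 t2]) (simp_all add: w_def)
qed

lemma hess_between_imp_strongly_convex:
  fixes \<phi> :: "real^'d::finite \<Rightarrow> real"
  assumes \<phi>: "twice_differentiable \<phi>" and H: "hess_between a b \<phi>"
  shows "strongly_convex a \<phi>"
  unfolding strongly_convex_iff_convexity_defect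
proof (intro ballI)
  fix u u' :: "real^'d" assume u: "u \<in> cube" and u': "u' \<in> cube"
  have lower: "a * (norm (u' - u))\<^sup>2 \<le> hess_form \<phi> (u + s *\<^sub>R (u' - u)) (u' - u)"
    if "0 \<le> s" "s \<le> 1" for s
    using H segment_in_cube[OF u u' that]
    unfolding hess_between_def inner_hess_eq_hess_form power2_norm_eq_inner by blast
  obtain s1 s2 where s: "0 \<le> s1" "s1 \<le> 1" "0 \<le> s2" "s2 \<le> 1"
    and "convexity_defect a \<phi> u u' = a / 8 * (norm (u' - u))\<^sup>2
       - (hess_form \<phi> (u + s1 *\<^sub>R (u' - u)) (u' - u)
          + hess_form \<phi> (u + s2 *\<^sub>R (u' - u)) (u' - u)) / 16"
    by (rule convexity_defect_taylor[OF \<phi> u u'])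
  with lower[OF s(1,2)] lower[OF s(3,4)] show "convexity_defect a \<phi> u u' \<le> 0" by argo
qed

section \<open>Convexity defects on cells of a grid\<close>

lemma abs_pdl_le_ck_norm:
  fixes \<phi> :: "real^'d::finite \<Rightarrow> real"
  assumes "ck_norm k \<alpha> \<phi> \<le> ennreal H" "x \<in> cube" "length is \<le> k"
  shows "\<bar>pdl is \<phi> x\<bar> \<le> max H 0"
proof -
  have "ennreal \<bar>pdl is \<phi> x\<bar> \<le> (SUP x \<in> cube. ennreal \<bar>pdl is \<phi> x\<bar>)"
    using assms(2) by (rule SUP_upper)
  also have "\<dots> \<le> (SUP is \<in> {is :: 'd list. length is \<le> k}. SUP x \<in> cube. ennreal \<bar>pdl is \<phi> x\<bar>)"
    using assms(3) by (intro SUP_upper) auto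
  also have "\<dots> \<le> ck_norm k \<alpha> \<phi>" unfolding ck_norm_def by simp
  also have "\<dots> \<le> ennreal H" by (rule assms(1))
  finally show ?thesis by (cases "0 \<le> H") (auto simp: ennreal_neg)
qed

lemma pdl_lipschitz_ck_norm:
  fixes \<phi> :: "real^'d::finite \<Rightarrow> real"
  assumes "ck_norm k 1 \<phi> \<le> ennreal H" "x \<in> cube" "y \<in> cube" "length is = k"
  shows "\<bar>pdl is \<phi> x - pdl is \<phi> y\<bar> \<le> max H 0 * dist x y"
proof (cases "x = y")
  case False
  then have "ennreal (\<bar>pdl is \<phi> x - pdl is \<phi> y\<bar> / dist x y powr 1) \<le> holder_semi 1 (pdl is \<phi>)"
    unfolding holder_semi_def using assms(2,3) by (intro SUP_upper2[of "(x, y)"]) auto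
  also have "\<dots> \<le> (SUP is \<in> {is :: 'd list. length is = k}. holder_semi 1 (pdl is \<phi>))"
    using assms(4) by (intro SUP_upper) auto
  also have "\<dots> \<le> ck_norm k 1 \<phi>" unfolding ck_norm_def by simp
  also have "\<dots> \<le> ennreal H" by (rule assms(1))
  finally have "\<bar>pdl is \<phi> x - pdl is \<phi> y\<bar> / dist x y \<le> max H 0"
    by (cases "0 \<le> H") (auto simp: ennreal_neg)
  then show ?thesis using False by (simp add: divide_le_eq mult.commute)
qed simp

definition l1_norm :: "real^'d \<Rightarrow> real" where
  "l1_norm z = (\<Sum>i\<in>UNIV. \<bar>z$i\<bar>)"

lemma l1_norm_nonneg: "0 \<le> l1_norm z"
  unfolding l1_norm_def by (simp add: sum_nonneg)

lemma l1_norm_triangle: "l1_norm (x + y) \<le> l1_norm x + l1_norm y"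
  unfolding l1_norm_def by (simp add: sum.distrib[symmetric] sum_mono abs_triangle_ineq)

lemma l1_norm_scaleR: "l1_norm (c *\<^sub>R x) = \<bar>c\<bar> * l1_norm x"
  unfolding l1_norm_def by (simp add: abs_mult sum_distrib_left)

lemma l1_norm_le_card_mult:
  fixes z :: "real^'d::finite"
  shows "(\<And>i. \<bar>z$i\<bar> \<le> c) \<Longrightarrow> l1_norm z \<le> real CARD('d) * c"
  unfolding l1_norm_def using sum_mono[of UNIV "\<lambda>i. \<bar>z$i\<bar>" "\<lambda>i. c"] by simp

lemma norm_le_l1_norm: "norm (z::real^'d::finite) \<le> l1_norm z"
  unfolding l1_norm_def by (rule norm_le_l1_cart)

lemma l1_norm_le_card_mult_norm: "l1_norm (z::real^'d::finite) \<le> real CARD('d) * norm z"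
  by (rule l1_norm_le_card_mult) (rule component_le_norm_cart)

lemma abs_bilinear_sum_le:
  fixes a b :: "real^'d::finite"
  assumes "\<And>i j. \<bar>h i j\<bar> \<le> c"
  shows "\<bar>\<Sum>i\<in>UNIV. \<Sum>j\<in>UNIV. a$i * b$j * h i j\<bar> \<le> c * l1_norm a * l1_norm b"
proof -
  have "\<bar>\<Sum>i\<in>UNIV. \<Sum>j\<in>UNIV. a$i * b$j * h i j\<bar> \<le> (\<Sum>i\<in>UNIV. \<Sum>j\<in>UNIV. \<bar>a$i * b$j * h i j\<bar>)"
    by (rule order.trans[OF sum_abs sum_mono]) (rule sum_abs)
  also have "\<dots> \<le> (\<Sum>i\<in>UNIV. \<Sum>j\<in>UNIV. c * (\<bar>a$i\<bar> * \<bar>b$j\<bar>))"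
    by (intro sum_mono) (simp add: abs_mult mult_left_mono assms mult.commute[of c])
  also have "\<dots> = c * l1_norm a * l1_norm b"
    unfolding l1_norm_def by (simp add: sum_product sum_distrib_left mult_ac)
  finally show ?thesis .
qed

lemma hess_form_scaleR: "hess_form \<phi> x (c *\<^sub>R z) = c\<^sup>2 * hess_form \<phi> x z"
  unfolding hess_form_def by (simp add: sum_distrib_left power2_eq_square mult_ac)

lemma hess_form_perturbation:
  fixes \<phi> :: "real^'d::finite \<Rightarrow> real"
  assumes bounded: "\<And>i j. \<bar>pdl [i, j] \<phi> \<xi>\<bar> \<le> H"
    and lipschitz: "\<And>i j. \<bar>pdl [i, j] \<phi> x - pdl [i, j] \<phi> \<xi>\<bar> \<le> H * l1_norm (x - \<xi>)"
  shows "\<bar>hess_form \<phi> x z - hess_form \<phi> \<xi> v\<bar>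
    \<le> H * l1_norm (x - \<xi>) * l1_norm z ^ 2 + H * l1_norm (z - v) * (l1_norm z + l1_norm v)"
proof -
  let ?h = "\<lambda>y i j. pdl [i, j] \<phi> y"
  have "hess_form \<phi> x z - hess_form \<phi> \<xi> v =
      (\<Sum>i\<in>UNIV. \<Sum>j\<in>UNIV. z$i * z$j * (?h x i j - ?h \<xi> i j))
    + (\<Sum>i\<in>UNIV. \<Sum>j\<in>UNIV. (z - v)$i * z$j * ?h \<xi> i j)
    + (\<Sum>i\<in>UNIV. \<Sum>j\<in>UNIV. v$i * (z - v)$j * ?h \<xi> i j)"
    unfolding hess_form_def by (simp add: sum_subtractf sum.distrib[symmetric] algebra_simps)
  moreover have "\<bar>\<Sum>i\<in>UNIV. \<Sum>j\<in>UNIV. z$i * z$j * (?h x i j - ?h \<xi> i j)\<bar>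
      \<le> H * l1_norm (x - \<xi>) * l1_norm z * l1_norm z"
    by (rule abs_bilinear_sum_le) (rule lipschitz)
  moreover have "\<bar>\<Sum>i\<in>UNIV. \<Sum>j\<in>UNIV. (z - v)$i * z$j * ?h \<xi> i j\<bar> \<le> H * l1_norm (z - v) * l1_norm z"
    by (rule abs_bilinear_sum_le) (rule bounded)
  moreover have "\<bar>\<Sum>i\<in>UNIV. \<Sum>j\<in>UNIV. v$i * (z - v)$j * ?h \<xi> i j\<bar> \<le> H * l1_norm v * l1_norm (z - v)"
    by (rule abs_bilinear_sum_le) (rule bounded)
  ultimately show ?thesis by (simp add: power2_eq_square algebra_simps)
qed


definition grid :: "nat \<Rightarrow> (real^'d) set" where
  "grid N = {a. \<forall>i. \<exists>k<N. a$i = real k / real N}"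

definition grid_box :: "nat \<Rightarrow> real^'d \<Rightarrow> (real^'d) set" where
  "grid_box N a = {x. \<forall>i. a$i \<le> x$i \<and> x$i \<le> a$i + 1 / real N}"

text \<open>The cap at \<open>N - 1\<close> puts points with a coordinate equal to 1 into the last cell.\<close>
definition grid_snap :: "nat \<Rightarrow> real^'d \<Rightarrow> real^'d" where
  "grid_snap N y = (\<chi> i. real (min (nat \<lfloor>y$i * real N\<rfloor>) (N - 1)) / real N)"

lemma finite_grid: "finite (grid N :: (real^'d::finite) set)"
proof -
  have "(grid N :: (real^'d) set) \<subseteq> (\<lambda>f. \<chi> i. real (f i) / real N) ` (UNIV \<rightarrow>\<^sub>E {..<N})"
  proof
    fix a :: "real^'d" assume "a \<in> grid N"
    then have "\<forall>i. \<exists>k. k < N \<and> a$i = real k / real N" unfolding grid_def by auto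
    then obtain f where f: "\<And>i. f i < N \<and> a$i = real (f i) / real N" by (auto dest!: choice)
    then have "a = (\<chi> i. real (f i) / real N)" by (simp add: vec_eq_iff)
    moreover have "f \<in> UNIV \<rightarrow>\<^sub>E {..<N}" using f by auto
    ultimately show "a \<in> (\<lambda>f. \<chi> i. real (f i) / real N) ` (UNIV \<rightarrow>\<^sub>E {..<N})" by blast
  qed
  then show ?thesis by (rule finite_subset) (intro finite_imageI finite_PiE; simp)
qed

lemma grid_snap:
  fixes y :: "real^'d::finite"
  assumes N: "N \<ge> 1" and y: "y \<in> cube"
  shows "grid_snap N y \<in> grid N" "y \<in> grid_box N (grid_snap N y)"
proof -
  have "real (min (nat \<lfloor>y$i * real N\<rfloor>) (N - 1)) / real N \<le> y$i \<and>
        y$i \<le> real (min (nat \<lfloor>y$i * real N\<rfloor>) (N - 1)) / real N + 1 / real N" for i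
  proof -
    have y01: "0 \<le> y$i" "y$i \<le> 1" using y unfolding cube_def by auto
    define k where "k = nat \<lfloor>y$i * real N\<rfloor>"
    have N0: "real N > 0" using N by simp
    have "\<lfloor>y$i * real N\<rfloor> \<ge> 0" using y01 N0 by simp
    then have k: "real k \<le> y$i * real N" "y$i * real N < real k + 1"
      unfolding k_def by linarith+
    show ?thesis
    proof (cases "k \<le> N - 1")
      case True
      then show ?thesis
        using k N0 unfolding k_def[symmetric]
        by (simp add: divide_le_eq le_divide_eq add_divide_distrib[symmetric] mult.commute)
    next
      case False
      then have "real N \<le> y$i * real N" using k by simp
      then have "y$i = 1" using y01 N0 by (simp add: mult_le_cancel_right2)
      moreover have "real (N - 1) / real N + 1 / real N = 1"
        using N by (simp add: of_nat_diff add_divide_distrib[symmetric])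
      moreover have "real (N - 1) / real N \<le> 1" using N by simp
      ultimately show ?thesis using False unfolding k_def[symmetric] by simp
    qed
  qed
  then show "y \<in> grid_box N (grid_snap N y)" unfolding grid_box_def grid_snap_def by simp
  show "grid_snap N y \<in> grid N" unfolding grid_def grid_snap_def using N
    by (auto intro!: exI[of _ "min (nat \<lfloor>y$_ * real N\<rfloor>) (N - 1)"])
qed

lemma grid_box_subset_cube:
  fixes a :: "real^'d::finite"
  assumes "a \<in> grid N"
  shows "grid_box N a \<subseteq> cube"
proof
  fix x assume x: "x \<in> grid_box N a"
  have "0 \<le> x$i \<and> x$i \<le> 1" for i
  proof -
    obtain k where k: "k < N" "a$i = real k / real N" using assms unfolding grid_def by blast
    then have "a$i + 1 / real N = real (k + 1) / real N" by (simp add: add_divide_distrib)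
    also have "\<dots> \<le> 1" using k by simp
    finally have "a$i + 1 / real N \<le> 1" .
    moreover have "a$i \<le> x$i" "x$i \<le> a$i + 1 / real N"
      using x unfolding grid_box_def by blast+
    moreover have "0 \<le> a$i" using k by simp
    ultimately show ?thesis by linarith
  qed
  then show "x \<in> cube" unfolding cube_def by simp
qed

lemma grid_box_diameter:
  assumes "p \<in> grid_box N a" "y \<in> grid_box N a"
  shows "\<bar>p$i - y$i\<bar> \<le> 1 / real N"
proof -
  have "a$i \<le> p$i" "p$i \<le> a$i + 1 / real N" "a$i \<le> y$i" "y$i \<le> a$i + 1 / real N"
    using assms unfolding grid_box_def by auto
  then show ?thesis by linarith
qed

lemma grid_box_eq_cbox: "grid_box N a = cbox a (a + (\<chi> i. 1 / real N))"
  by (auto simp: grid_box_def mem_box_cart)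

lemma grid_box_sets [measurable]: "grid_box N a \<in> sets (borel :: (real^'d::finite) measure)"
  unfolding grid_box_eq_cbox by simp

lemma measure_lam_grid_box:
  fixes a :: "real^'d::finite"
  assumes "a \<in> grid N"
  shows "measure lam (grid_box N a) = (1 / real N) ^ CARD('d)"
proof -
  have "emeasure lam (grid_box N a) = emeasure lborel (cube \<inter> grid_box N a)"
    unfolding lam_def by (rule emeasure_restricted) (simp_all add: cube_eq_cbox)
  also have "cube \<inter> grid_box N a = grid_box N a" using grid_box_subset_cube[OF assms] by blast
  finally have "measure lam (grid_box N a) = measure lborel (cbox a (a + (\<chi> i. 1 / real N)))"
    by (simp add: measure_def grid_box_eq_cbox)
  also have "\<dots> = (\<Prod>i\<in>UNIV. (a + (\<chi> i. 1 / real N))$i - a$i)"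
  proof (rule content_cbox_cart)
    have "a \<in> cbox a (a + (\<chi> i. 1 / real N))" by (simp add: mem_box_cart)
    then show "cbox a (a + (\<chi> i. 1 / real N)) \<noteq> {}" by blast
  qed
  finally show ?thesis by simp
qed

lemma not_strongly_convex_imp_hess_form_less:
  fixes \<phi> :: "real^'d::finite \<Rightarrow> real"
  assumes \<phi>: "twice_differentiable \<phi>" and not_sc: "\<not> strongly_convex \<kappa> \<phi>" and t: "t > 0"
  obtains \<xi> v where "\<xi> \<in> cube" "norm v = t" "hess_form \<phi> \<xi> v < \<kappa> * t\<^sup>2"
proof -
  obtain u u' where u: "u \<in> cube" "u' \<in> cube" and pos: "convexity_defect \<kappa> \<phi> u u' > 0"
    using not_sc unfolding strongly_convex_iff_convexity_defect by force
  define w where "w = u' - u"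
  obtain s1 s2 where s: "0 \<le> s1" "s1 \<le> 1" "0 \<le> s2" "s2 \<le> 1"
    and eq: "convexity_defect \<kappa> \<phi> u u' = \<kappa> / 8 * (norm w)\<^sup>2
       - (hess_form \<phi> (u + s1 *\<^sub>R w) w + hess_form \<phi> (u + s2 *\<^sub>R w) w) / 16"
    unfolding w_def by (rule convexity_defect_taylor[OF \<phi> u])
  obtain \<xi> where \<xi>: "\<xi> \<in> cube" and less: "hess_form \<phi> \<xi> w < \<kappa> * (norm w)\<^sup>2"
  proof (cases "hess_form \<phi> (u + s1 *\<^sub>R w) w < \<kappa> * (norm w)\<^sup>2")
    case True
    then show ?thesis using segment_in_cube[OF u s(1,2)] that unfolding w_def by blast
  next
    case False
    then have "hess_form \<phi> (u + s2 *\<^sub>R w) w < \<kappa> * (norm w)\<^sup>2" using pos eq by argo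
    then show ?thesis using segment_in_cube[OF u s(3,4)] that unfolding w_def by blast
  qed
  have "w \<noteq> 0" using less by (auto simp: hess_form_def)
  define c where "c = t / norm w"
  have "hess_form \<phi> \<xi> (c *\<^sub>R w) = c\<^sup>2 * hess_form \<phi> \<xi> w" by (rule hess_form_scaleR)
  also have "\<dots> < c\<^sup>2 * (\<kappa> * (norm w)\<^sup>2)" using less \<open>w \<noteq> 0\<close> t by (simp add: c_def)
  also have "\<dots> = \<kappa> * t\<^sup>2" using \<open>w \<noteq> 0\<close> by (simp add: c_def power_divide)
  finally show ?thesis using that[OF \<xi>, of "c *\<^sub>R w"] \<open>w \<noteq> 0\<close> t by (simp add: c_def)
qed

lemma segment_endpoints_in_cube_near:
  fixes \<xi> v :: "real^'d::finite"
  assumes \<xi>: "\<xi> \<in> cube" and v: "\<And>i. \<bar>v$i\<bar> \<le> 1"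
  obtains p where "p \<in> cube" "p + v \<in> cube" "\<And>i. \<bar>p$i - \<xi>$i\<bar> \<le> \<bar>v$i\<bar>"
proof -
  define p where "p = (\<chi> i. if v$i \<ge> 0 then min (\<xi>$i) (1 - v$i) else max (\<xi>$i) (- v$i))"
  have \<xi>01: "0 \<le> \<xi>$i \<and> \<xi>$i \<le> 1" for i using \<xi> unfolding cube_def by auto
  have "0 \<le> p$i \<and> p$i \<le> 1 \<and> 0 \<le> p$i + v$i \<and> p$i + v$i \<le> 1 \<and> \<bar>p$i - \<xi>$i\<bar> \<le> \<bar>v$i\<bar>" for i
    using \<xi>01[of i] v[of i] unfolding p_def by (auto simp: min_def max_def)
  then show ?thesis using that[of p] unfolding cube_def by auto
qed

lemma convexity_defect_ge_near_violation:
  fixes \<phi> :: "real^'d::finite \<Rightarrow> real"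
  assumes \<phi>: "twice_differentiable \<phi>"
    and bounded: "\<And>x i j. x \<in> cube \<Longrightarrow> \<bar>pdl [i, j] \<phi> x\<bar> \<le> H"
    and lipschitz: "\<And>x y i j. x \<in> cube \<Longrightarrow> y \<in> cube \<Longrightarrow>
          \<bar>pdl [i, j] \<phi> x - pdl [i, j] \<phi> y\<bar> \<le> H * dist x y"
    and H: "0 \<le> H" and \<kappa>\<eta>: "0 \<le> \<kappa> + \<eta>"
    and \<xi>: "\<xi> \<in> cube" and violation: "hess_form \<phi> \<xi> v < \<kappa> * (norm v)\<^sup>2"
    and p: "p \<in> cube" and q: "q \<in> cube"
    and \<delta>: "l1_norm (q - p - v) \<le> \<delta>" "\<delta> \<le> norm v"
    and \<rho>: "l1_norm v + \<delta> \<le> \<rho>" and r: "l1_norm (p - \<xi>) \<le> r"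
  shows "((\<kappa> + \<eta>) * (norm v - \<delta>)\<^sup>2 - \<kappa> * (norm v)\<^sup>2 - H * (r + \<rho>) * \<rho>\<^sup>2 - 2 * H * \<delta> * \<rho>) / 8
    \<le> convexity_defect (\<kappa> + \<eta>) \<phi> p q"
proof -
  define z where "z = q - p"
  have \<delta>0: "0 \<le> \<delta>" using l1_norm_nonneg \<delta>(1) by (rule order_trans)
  have z: "l1_norm z \<le> \<rho>"
    using l1_norm_triangle[of v "z - v"] \<delta> \<rho> by (simp add: z_def)
  have "norm v \<le> norm z + l1_norm (z - v)"
    using norm_triangle_ineq[of z "v - z"] norm_le_l1_norm[of "z - v"]
    by (simp add: norm_minus_commute)
  then have "(norm v - \<delta>)\<^sup>2 \<le> (norm z)\<^sup>2" using \<delta> by (intro power_mono) (auto simp: z_def)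
  then have norm_z: "(\<kappa> + \<eta>) * (norm v - \<delta>)\<^sup>2 \<le> (\<kappa> + \<eta>) * (norm z)\<^sup>2"
    using \<kappa>\<eta> by (rule mult_left_mono)
  have hess: "hess_form \<phi> (p + s *\<^sub>R z) z \<le> \<kappa> * (norm v)\<^sup>2 + H * (r + \<rho>) * \<rho>\<^sup>2 + 2 * H * \<delta> * \<rho>"
    if s: "0 \<le> s" "s \<le> 1" for s
  proof -
    define x where "x = p + s *\<^sub>R z"
    have x: "x \<in> cube" unfolding x_def z_def by (rule segment_in_cube[OF p q s])
    have "l1_norm (x - \<xi>) \<le> l1_norm (p - \<xi>) + l1_norm (s *\<^sub>R z)"
      using l1_norm_triangle[of "p - \<xi>" "s *\<^sub>R z"] by (simp add: x_def algebra_simps)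
    also have "\<dots> \<le> r + \<rho>"
      using r z s mult_left_le_one_le[OF l1_norm_nonneg[of z], of s] by (simp add: l1_norm_scaleR)
    finally have x\<xi>: "l1_norm (x - \<xi>) \<le> r + \<rho>" .
    have "\<bar>hess_form \<phi> x z - hess_form \<phi> \<xi> v\<bar>
        \<le> H * l1_norm (x - \<xi>) * l1_norm z ^ 2 + H * l1_norm (z - v) * (l1_norm z + l1_norm v)"
    proof (rule hess_form_perturbation)
      show "\<bar>pdl [i, j] \<phi> x - pdl [i, j] \<phi> \<xi>\<bar> \<le> H * l1_norm (x - \<xi>)" for i j
        using lipschitz[OF x \<xi>, of i j] norm_le_l1_norm[of "x - \<xi>"] H
        by (smt (verit) dist_norm mult_left_mono)
    qed (rule bounded[OF \<xi>])
    also have "\<dots> \<le> H * (r + \<rho>) * \<rho>\<^sup>2 + H * \<delta> * (2 * \<rho>)"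
      using x\<xi> z \<delta> \<delta>0 \<rho> H l1_norm_nonneg[of z] l1_norm_nonneg[of v] l1_norm_nonneg[of "x - \<xi>"]
        l1_norm_nonneg[of "z - v"]
      by (intro add_mono mult_mono power_mono) (auto simp: z_def)
    finally show ?thesis using violation unfolding x_def by (simp add: algebra_simps)
  qed
  obtain s1 s2 where s: "0 \<le> s1" "s1 \<le> 1" "0 \<le> s2" "s2 \<le> 1"
    and eq: "convexity_defect (\<kappa> + \<eta>) \<phi> p q = (\<kappa> + \<eta>) / 8 * (norm z)\<^sup>2
       - (hess_form \<phi> (p + s1 *\<^sub>R z) z + hess_form \<phi> (p + s2 *\<^sub>R z) z) / 16"
    unfolding z_def by (rule convexity_defect_taylor[OF \<phi> p q])
  show ?thesis using eq hess[OF s(1,2)] hess[OF s(3,4)] norm_z by argo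
qed

lemma defect_budget_arith:
  fixes \<kappa> \<eta> D h t H :: real
  assumes "0 \<le> \<kappa>" "0 \<le> \<eta>" "\<kappa> + \<eta> \<le> 1" "0 \<le> D" "0 \<le> h" "0 \<le> t"
    and budget: "16 * H * D^3 * t^3 + 8 * H * D^2 * h * t + 4 * D * h * t \<le> \<eta> * t\<^sup>2 / 2"
  shows "\<eta> * t\<^sup>2 / 16 \<le> ((\<kappa> + \<eta>) * (t - 2 * D * h)\<^sup>2 - \<kappa> * t\<^sup>2
      - H * (2 * D * t + 2 * D * t) * (2 * D * t)\<^sup>2 - 2 * H * (2 * D * h) * (2 * D * t)) / 8"
proof -
  have "(t - 2 * D * h)\<^sup>2 = t\<^sup>2 - 4 * D * h * t + (2 * D * h)\<^sup>2"
    by (simp add: power2_eq_square algebra_simps)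
  then have "(\<kappa> + \<eta>) * (t\<^sup>2 - 4 * D * h * t) \<le> (\<kappa> + \<eta>) * (t - 2 * D * h)\<^sup>2"
    using assms(1,2) by (intro mult_left_mono) auto
  moreover have "(\<kappa> + \<eta>) * (4 * D * h * t) \<le> 4 * D * h * t"
    using assms by (intro mult_left_le_one_le) auto
  moreover have "H * (2 * D * t + 2 * D * t) * (2 * D * t)\<^sup>2 + 2 * H * (2 * D * h) * (2 * D * t)
      = 16 * H * D^3 * t^3 + 8 * H * D^2 * h * t"
    by (simp add: power2_eq_square power3_eq_cube algebra_simps)
  ultimately show ?thesis using budget by (simp add: algebra_simps)
qed

lemma defect_on_grid_boxes_at_scale:
  fixes \<phi> :: "real^'d::finite \<Rightarrow> real"
  assumes \<phi>: "twice_differentiable \<phi>"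
    and bounded: "\<And>x i j. x \<in> cube \<Longrightarrow> \<bar>pdl [i, j] \<phi> x\<bar> \<le> H"
    and lipschitz: "\<And>x y i j. x \<in> cube \<Longrightarrow> y \<in> cube \<Longrightarrow>
          \<bar>pdl [i, j] \<phi> x - pdl [i, j] \<phi> y\<bar> \<le> H * dist x y"
    and H: "0 \<le> H" and not_sc: "\<not> strongly_convex \<kappa> \<phi>"
    and \<kappa>: "0 \<le> \<kappa>" and \<eta>: "0 \<le> \<eta>" and \<kappa>\<eta>: "\<kappa> + \<eta> \<le> 1"
    and N: "1 \<le> N" and t: "0 < t" "t \<le> 1" and fine: "2 * real CARD('d) / real N \<le> t"
    and budget: "16 * H * real CARD('d)^3 * t^3
      + (8 * H * real CARD('d)^2 + 4 * real CARD('d)) * t / real N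
      \<le> \<eta> * t\<^sup>2 / 2"
  shows "\<exists>a\<in>grid N. \<exists>b\<in>grid N. \<forall>p\<in>grid_box N a. \<forall>q\<in>grid_box N b.
    \<eta> * t\<^sup>2 / 16 \<le> convexity_defect (\<kappa> + \<eta>) \<phi> p q"
proof -
  define D where "D = real CARD('d)"
  define h where "h = 1 / real N"
  have D: "1 \<le> D" unfolding D_def by (simp add: Suc_le_eq)
  have h0: "0 \<le> h" and h2: "2 * D * h \<le> t" using fine unfolding D_def h_def by auto
  moreover have "1 * h \<le> (2 * D) * h" using D h0 by (intro mult_right_mono) auto
  ultimately have h: "0 \<le> h" "2 * D * h \<le> t" "h \<le> t" by linarith+
  obtain \<xi> v where \<xi>: "\<xi> \<in> cube" and v: "norm v = t" and violation: "hess_form \<phi> \<xi> v < \<kappa> * t\<^sup>2"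
    by (rule not_strongly_convex_imp_hess_form_less[OF \<phi> not_sc t(1)])
  have v_le: "\<bar>v$i\<bar> \<le> t" for i using component_le_norm_cart[of v i] v by simp
  have "\<bar>v$i\<bar> \<le> 1" for i using v_le t(2) by (rule order_trans)
  then obtain p0 where p0: "p0 \<in> cube" "p0 + v \<in> cube" and p0_near: "\<And>i. \<bar>p0$i - \<xi>$i\<bar> \<le> \<bar>v$i\<bar>"
    using segment_endpoints_in_cube_near[OF \<xi>] by blast
  note a = grid_snap[OF N p0(1)] and b = grid_snap[OF N p0(2)]
  show ?thesis
  proof (intro bexI ballI)
    fix p q
    assume p: "p \<in> grid_box N (grid_snap N p0)" and q: "q \<in> grid_box N (grid_snap N (p0 + v))"
    have pq: "p \<in> cube" "q \<in> cube"
      using p q grid_box_subset_cube[OF a(1)] grid_box_subset_cube[OF b(1)] by blast+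
    have p_near: "\<bar>p$i - p0$i\<bar> \<le> h" and q_near: "\<bar>q$i - (p0 + v)$i\<bar> \<le> h" for i
      unfolding h_def using grid_box_diameter p q a(2) b(2) by blast+
    have "\<bar>(q - p - v)$i\<bar> \<le> 2 * h" for i using p_near[of i] q_near[of i] by simp
    then have \<delta>: "l1_norm (q - p - v) \<le> 2 * D * h"
      using l1_norm_le_card_mult[of "q - p - v" "2 * h"] unfolding D_def by simp
    have "\<bar>(p - \<xi>)$i\<bar> \<le> 2 * t" for i using p_near[of i] p0_near[of i] v_le[of i] h by simp
    then have r: "l1_norm (p - \<xi>) \<le> 2 * D * t"
      using l1_norm_le_card_mult[of "p - \<xi>" "2 * t"] unfolding D_def by simp
    have "t \<le> D * t" using mult_right_mono[OF D, of t] t(1) by simp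
    moreover have "l1_norm v \<le> D * t"
      using l1_norm_le_card_mult_norm[of v] v unfolding D_def by simp
    ultimately have \<rho>: "l1_norm v + 2 * D * h \<le> 2 * D * t" using h(2) by linarith
    have "((\<kappa> + \<eta>) * (t - 2 * D * h)\<^sup>2 - \<kappa> * t\<^sup>2 - H * (2 * D * t + 2 * D * t) * (2 * D * t)\<^sup>2
          - 2 * H * (2 * D * h) * (2 * D * t)) / 8 \<le> convexity_defect (\<kappa> + \<eta>) \<phi> p q"
      using convexity_defect_ge_near_violation[OF \<phi> bounded lipschitz H _ \<xi> _
          pq \<delta> _ \<rho> r] \<kappa> \<eta> violation v h
      by simp
    moreover have "16 * H * D^3 * t^3 + 8 * H * D^2 * h * t + 4 * D * h * t \<le> \<eta> * t\<^sup>2 / 2"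
      using budget unfolding D_def h_def by (simp add: algebra_simps add_divide_distrib)
    ultimately show "\<eta> * t\<^sup>2 / 16 \<le> convexity_defect (\<kappa> + \<eta>) \<phi> p q"
      using defect_budget_arith[OF \<kappa> \<eta> \<kappa>\<eta>, of D h t H] D h t by linarith
  qed (use a b in auto)
qed

lemma exists_grid_scale:
  fixes H \<eta> D :: real
  assumes H: "1 \<le> H" and \<eta>: "0 < \<eta>" "\<eta> \<le> 1" and D: "1 \<le> D"
  obtains N :: nat and t where "1 \<le> N" "0 < t" "t \<le> 1" "2 * D / real N \<le> t"
    "16 * H * D^3 * t^3 + (8 * H * D^2 + 4 * D) * t / real N \<le> \<eta> * t\<^sup>2 / 2"
proof -
  \<comment> \<open>\<open>t\<close> makes the cubic term equal to \<open>\<eta> t\<^sup>2 / 4\<close>; the mesh then bounds the rest by the same.\<close>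
  define t where "t = \<eta> / (64 * H * D^3)"
  define K where "K = 8 * H * D^2 + 4 * D"
  have "1 \<le> H * D^3" using H D by (metis mult_ge1_I one_le_power)
  then have t: "0 < t" "t \<le> 1" and cubic: "16 * H * D^3 * t^3 = \<eta> * t\<^sup>2 / 4"
    using \<eta> unfolding t_def by (auto simp: field_simps power2_eq_square power3_eq_cube)
  have "0 \<le> 8 * H * D^2" using H by simp
  then have K: "2 * D \<le> K" "0 < K" using D unfolding K_def by linarith+
  obtain N :: nat where N: "0 < N" "inverse (real N) < \<eta> * t / (4 * K)"
    using ex_inverse_of_nat_less[of "\<eta> * t / (4 * K)"] \<eta> t K by auto
  have "K / real N = K * inverse (real N)" by (simp add: divide_inverse)
  also have "\<dots> \<le> K * (\<eta> * t / (4 * K))" using N K by (intro mult_left_mono) auto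
  also have "\<dots> = \<eta> * t / 4" using K by simp
  finally have KN: "K / real N \<le> \<eta> * t / 4" .
  have "2 * D / real N \<le> K / real N" using K by (simp add: divide_right_mono)
  also have "\<dots> \<le> t" using KN mult_right_mono[of \<eta> 1 t] \<eta> t by linarith
  finally have "2 * D / real N \<le> t" .
  moreover have "K * t / real N \<le> \<eta> * t\<^sup>2 / 4"
    using mult_right_mono[OF KN, of t] t by (simp add: power2_eq_square mult_ac)
  ultimately show ?thesis
    using that[of N t] N t cubic unfolding K_def by simp
qed

lemma defect_on_grid_boxes:
  fixes H \<kappa> \<eta> :: real
  assumes \<kappa>: "0 \<le> \<kappa>" and \<eta>: "0 < \<eta>" and \<kappa>\<eta>: "\<kappa> + \<eta> \<le> 1"
  obtains N c where "1 \<le> N" "0 < c"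
    "\<And>\<phi> :: real^'d::finite \<Rightarrow> real. twice_differentiable \<phi> \<Longrightarrow> ck_norm 2 1 \<phi> \<le> ennreal H \<Longrightarrow>
       \<not> strongly_convex \<kappa> \<phi> \<Longrightarrow> \<exists>a\<in>grid N. \<exists>b\<in>grid N.
         \<forall>p\<in>grid_box N a. \<forall>q\<in>grid_box N b. c \<le> convexity_defect (\<kappa> + \<eta>) \<phi> p q"
proof -
  define H' where "H' = max H 0 + 1"
  have H': "1 \<le> H'" unfolding H'_def by simp
  obtain N t where N: "1 \<le> N" and t: "0 < t" "t \<le> 1" "2 * real CARD('d) / real N \<le> t"
    and budget: "16 * H' * real CARD('d)^3 * t^3
      + (8 * H' * real CARD('d)^2 + 4 * real CARD('d)) * t / real N \<le> \<eta> * t\<^sup>2 / 2"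
    using exists_grid_scale[OF H' \<eta>, of "real CARD('d)"] \<kappa> \<kappa>\<eta> by (auto simp: Suc_le_eq)
  show ?thesis
  proof (rule that[OF N, of "\<eta> * t\<^sup>2 / 16"])
    fix \<phi> :: "real^'d \<Rightarrow> real"
    assume \<phi>: "twice_differentiable \<phi>" and norm: "ck_norm 2 1 \<phi> \<le> ennreal H"
      and not_sc: "\<not> strongly_convex \<kappa> \<phi>"
    have bounded: "\<bar>pdl [i, j] \<phi> x\<bar> \<le> H'" if "x \<in> cube" for x i j
      using abs_pdl_le_ck_norm[OF norm that, of "[i, j]"] unfolding H'_def by simp
    have lipschitz: "\<bar>pdl [i, j] \<phi> x - pdl [i, j] \<phi> y\<bar> \<le> H' * dist x y"
      if "x \<in> cube" "y \<in> cube" for x y i j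
      using pdl_lipschitz_ck_norm[OF norm that, of "[i, j]"]
        mult_right_mono[of "max H 0" H' "dist x y"] unfolding H'_def by simp
    show "\<exists>a\<in>grid N. \<exists>b\<in>grid N. \<forall>p\<in>grid_box N a. \<forall>q\<in>grid_box N b.
        \<eta> * t\<^sup>2 / 16 \<le> convexity_defect (\<kappa> + \<eta>) \<phi> p q"
      by (rule defect_on_grid_boxes_at_scale[OF \<phi> bounded lipschitz _ not_sc \<kappa> _ \<kappa>\<eta> N t budget])
         (use H' \<eta> in auto)
  qed (use t \<eta> in auto)
qed

lemma H_pot_defect_on_grid_boxes:
  assumes "0 \<le> \<kappa>" "0 < \<eta>" "\<kappa> + \<eta> \<le> 1"
  obtains N c where "1 \<le> N" "0 < c"
    "\<And>\<phi> :: real^'d::finite \<Rightarrow> real. \<phi> \<in> H_pot A H \<Longrightarrow> \<phi> \<notin> H_pot_sc \<kappa> A H \<Longrightarrow>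
       \<exists>a\<in>grid N. \<exists>b\<in>grid N. \<forall>p\<in>grid_box N a. \<forall>q\<in>grid_box N b. c \<le> convexity_defect (\<kappa> + \<eta>) \<phi> p q"
proof -
  obtain N c where "1 \<le> N" "0 < c" and boxes: "\<And>\<phi> :: real^'d \<Rightarrow> real.
      twice_differentiable \<phi> \<Longrightarrow> ck_norm 2 1 \<phi> \<le> ennreal H \<Longrightarrow> \<not> strongly_convex \<kappa> \<phi> \<Longrightarrow>
      \<exists>a\<in>grid N. \<exists>b\<in>grid N. \<forall>p\<in>grid_box N a. \<forall>q\<in>grid_box N b. c \<le> convexity_defect (\<kappa> + \<eta>) \<phi> p q"
    by (rule defect_on_grid_boxes[where H=H, OF assms]) (rule that; assumption)
  then show ?thesis
    using that[of N c] twice_differentiable_recu_network unfolding H_pot_sc_def H_pot_def by blast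
qed

section \<open>Sample pairs in grid cells\<close>

lemma sets_cube [measurable]: "cube \<in> sets (borel :: (real^'d::finite) measure)"
  unfolding cube_eq_cbox by simp

context prob_space
begin

lemma AE_eventually_sum_gt_half_mean:
  fixes X :: "nat \<Rightarrow> 'a \<Rightarrow> real"
  assumes indep: "indep_vars (\<lambda>_. borel) X UNIV"
    and range: "\<And>j \<omega>. X j \<omega> \<in> {0..1}"
    and mean: "\<And>j. expectation (X j) = p" and p: "0 < p"
  shows "AE \<omega> in M. \<forall>\<^sub>F k in sequentially. real k * p / 2 < (\<Sum>j\<in>{1..k}. X j \<omega>)"
proof -
  have [measurable]: "X j \<in> borel_measurable M" for j
    using indep unfolding indep_vars_def by blast
  define bad where "bad k = {\<omega> \<in> space M. (\<Sum>j\<in>{1..k}. X j \<omega>) \<le> real k * p / 2}" for k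
  have bad_events: "bad k \<in> events" for k unfolding bad_def by measurable
  have hoeffding: "prob (bad k) \<le> exp (- p\<^sup>2 / 2) ^ k" for k
  proof (cases "k = 0")
    case False
    interpret Hoeffding_ineq M "{1..k}" X "\<lambda>_. 0" "\<lambda>_. 1" "real k * p"
    proof unfold_locales
      show "indep_vars (\<lambda>_. borel) X {1..k}" by (rule indep_vars_subset[OF indep]) auto
      show "AE \<omega> in M. X j \<omega> \<in> {0..1}" for j using range by simp
    qed (simp_all add: range mean)
    have "prob (bad k) \<le> exp (-2 * (real k * p / 2)\<^sup>2 / (\<Sum>j\<in>{1..k}. (1 - 0)\<^sup>2))"
      using Hoeffding_ineq_le[of "real k * p / 2"] False p unfolding bad_def
      by (simp add: mult.commute[of p])
    also have "\<dots> = exp (- p\<^sup>2 / 2) ^ k"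
      using False by (simp add: power2_eq_square field_simps flip: exp_of_nat_mult)
    finally show ?thesis .
  qed (simp add: bad_def)
  have "summable (\<lambda>k. prob (bad k))"
    by (rule summable_comparison_test[OF _ summable_geometric[of "exp (- p\<^sup>2 / 2)"]])
       (use hoeffding p in auto)
  then have "AE \<omega> in M. \<forall>\<^sub>F k in sequentially. \<omega> \<in> space M - bad k"
    by (intro borel_cantelli_AE1[OF bad_events]) (simp_all add: emeasure_eq_measure)
  then show ?thesis
    by (rule AE_mp) (auto elim!: eventually_mono simp: bad_def not_le)
qed

lemma measurable_indep_pair_components:
  assumes "indep_vars (\<lambda>_. borel) (\<lambda>k. case k of Inl j \<Rightarrow> U j | Inr j \<Rightarrow> U' j) UNIV"
  shows "U j \<in> borel_measurable M" "U' j \<in> borel_measurable M"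
  using assms unfolding indep_vars_def by (metis (no_types) old.sum.simps(5,6) UNIV_I)+

lemma AE_in_cube:
  assumes "X \<in> borel_measurable M" "distr M borel X = lam"
  shows "AE \<omega> in M. X \<omega> \<in> cube"
proof -
  have "AE x in distr M borel X. x \<in> cube"
    unfolding assms(2) lam_def by (subst AE_density) (auto simp: indicator_def)
  then show ?thesis using assms(1) by (subst (asm) AE_distr_iff) auto
qed

context
  fixes U U' :: "nat \<Rightarrow> 'a \<Rightarrow> 'b::topological_space" and A B :: "'b set"
  assumes indep: "indep_vars (\<lambda>_. borel) (\<lambda>k. case k of Inl j \<Rightarrow> U j | Inr j \<Rightarrow> U' j) UNIV"
    and A [measurable]: "A \<in> sets borel" and B [measurable]: "B \<in> sets borel"
begin

declare measurable_indep_pair_components[OF indep, measurable]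

lemma indep_vars_indicator_pairs:
  "indep_vars (\<lambda>_. borel) (\<lambda>j \<omega>. indicator A (U j \<omega>) * indicator B (U' j \<omega>) :: real) UNIV"
proof -
  define UU where "UU = (\<lambda>k. case k of Inl j \<Rightarrow> U j | Inr j \<Rightarrow> U' j)"
  define K where "K = (\<lambda>j::nat. {Inl j, Inr j :: nat + nat})"
  define Y where
    "Y = (\<lambda>j (f :: nat + nat \<Rightarrow> 'b). indicator A (f (Inl j)) * indicator B (f (Inr j)) :: real)"
  have "indep_vars (\<lambda>j. PiM (K j) (\<lambda>_. borel)) (\<lambda>j \<omega>. restrict (\<lambda>i. UU i \<omega>) (K j)) UNIV"
    by (rule indep_vars_restrict[OF indep[folded UU_def]]) (auto simp: K_def disjoint_family_on_def)
  moreover have "Y j \<in> borel_measurable (PiM (K j) (\<lambda>_. borel))" for j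
  proof -
    have "(\<lambda>f. f (Inl j)) \<in> measurable (PiM (K j) (\<lambda>_. borel)) (borel :: 'b measure)"
      and "(\<lambda>f. f (Inr j)) \<in> measurable (PiM (K j) (\<lambda>_. borel)) (borel :: 'b measure)"
      by (rule measurable_component_singleton, simp add: K_def)+
    then show ?thesis unfolding Y_def by measurable
  qed
  ultimately have "indep_vars (\<lambda>_. borel) (\<lambda>j \<omega>. Y j (restrict (\<lambda>i. UU i \<omega>) (K j))) UNIV"
    by (rule indep_vars_compose2)
  then show ?thesis by (simp add: Y_def K_def UU_def)
qed

lemma expectation_indicator_pair:
  "expectation (\<lambda>\<omega>. indicator A (U j \<omega>) * indicator B (U' j \<omega>) :: real)
     = prob (U j -` A \<inter> space M) * prob (U' j -` B \<inter> space M)"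
proof -
  define UU where "UU = (\<lambda>k. case k of Inl j \<Rightarrow> U j | Inr j \<Rightarrow> U' j)"
  define E where "E = {\<omega> \<in> space M. U j \<omega> \<in> A \<and> U' j \<omega> \<in> B}"
  have "E \<in> events" unfolding E_def by measurable
  then have "expectation (\<lambda>\<omega>. indicator A (U j \<omega>) * indicator B (U' j \<omega>) :: real) = prob E"
    by (subst Bochner_Integration.integral_cong[where g="indicator E"])
       (auto simp: E_def indicator_def)
  also have "E = (\<Inter>i\<in>{Inl j, Inr j}. UU i -` (case i of Inl _ \<Rightarrow> A | Inr _ \<Rightarrow> B) \<inter> space M)"
    by (auto simp: E_def UU_def)
  also have "prob \<dots> =
      (\<Prod>i\<in>{Inl j, Inr j}. prob (UU i -` (case i of Inl _ \<Rightarrow> A | Inr _ \<Rightarrow> B) \<inter> space M))"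
    by (rule indep_varsD[OF indep[folded UU_def]]) (auto split: sum.split)
  finally show ?thesis by (simp add: UU_def)
qed

lemma AE_eventually_pair_frequency:
  assumes laws: "\<And>j. distr M borel (U j) = L" "\<And>j. distr M borel (U' j) = L"
    and pos: "0 < measure L A * measure L B"
  shows "AE \<omega> in M. \<forall>\<^sub>F k in sequentially. real k * (measure L A * measure L B) / 2
      < (\<Sum>j\<in>{1..k}. indicator A (U j \<omega>) * indicator B (U' j \<omega>) :: real)"
proof (rule AE_eventually_sum_gt_half_mean[OF indep_vars_indicator_pairs _ _ pos])
  show "expectation (\<lambda>\<omega>. indicator A (U j \<omega>) * indicator B (U' j \<omega>) :: real)
      = measure L A * measure L B" for j
    using measure_distr[of "U j" M borel A] measure_distr[of "U' j" M borel B] laws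
    by (simp add: expectation_indicator_pair)
qed (simp add: indicator_def)

end

context
  fixes U U' :: "nat \<Rightarrow> 'a \<Rightarrow> real^'d::finite"
  assumes indep: "indep_vars (\<lambda>_. borel) (\<lambda>k. case k of Inl j \<Rightarrow> U j | Inr j \<Rightarrow> U' j) UNIV"
    and laws: "\<And>j. distr M borel (U j) = lam" "\<And>j. distr M borel (U' j) = lam"
begin

lemma AE_pair_samples_in_cube: "AE \<omega> in M. \<forall>j. U j \<omega> \<in> cube \<and> U' j \<omega> \<in> cube"
  using AE_in_cube[OF measurable_indep_pair_components(1)[OF indep] laws(1)]
    AE_in_cube[OF measurable_indep_pair_components(2)[OF indep] laws(2)]
  by (simp add: AE_all_countable)

lemma AE_eventually_grid_box_pair_frequency:
  assumes "1 \<le> N"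
  shows "AE \<omega> in M. \<forall>a\<in>grid N. \<forall>b\<in>grid N. \<forall>\<^sub>F k in sequentially.
    real k * (1 / real N) ^ (2 * CARD('d)) / 2
      < (\<Sum>j\<in>{1..k}. indicator (grid_box N a) (U j \<omega>) * indicator (grid_box N b) (U' j \<omega>))"
proof (intro eventually_ball_finite finite_grid ballI)
  fix a b :: "real^'d" assume ab: "a \<in> grid N" "b \<in> grid N"
  then have "(1 / real N) ^ (2 * CARD('d))
      = measure lam (grid_box N a) * measure lam (grid_box N b)"
    by (simp add: measure_lam_grid_box mult_2 power_add)
  then show "AE \<omega> in M. \<forall>\<^sub>F k in sequentially. real k * (1 / real N) ^ (2 * CARD('d)) / 2
      < (\<Sum>j\<in>{1..k}. indicator (grid_box N a) (U j \<omega>) * indicator (grid_box N b) (U' j \<omega>))"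
    using assms ab
    by (simp only:) (rule AE_eventually_pair_frequency[OF indep grid_box_sets grid_box_sets laws];
        simp add: measure_lam_grid_box)
qed

end

end

section \<open>The penalized empirical minimax problem\<close>

lemma average_bounds:
  fixes f :: "nat \<Rightarrow> real"
  assumes "\<And>i. a \<le> f i" "\<And>i. f i \<le> 0"
  shows "a \<le> (\<Sum>i=1..n. f i) / real n" "(\<Sum>i=1..n. f i) / real n \<le> 0"
proof -
  show "(\<Sum>i=1..n. f i) / real n \<le> 0" using assms(2) by (simp add: sum_nonpos divide_nonpos_nonneg)
  have "a \<le> 0" using assms[of 0] by linarith
  moreover have "real n * a \<le> (\<Sum>i=1..n. f i)" using sum_mono[of "{1..n}" "\<lambda>_. a" f] assms(1) by simp
  ultimately show "a \<le> (\<Sum>i=1..n. f i) / real n"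
    by (cases "n = 0") (simp_all add: le_divide_eq mult.commute)
qed

lemma ln_discriminator_bounds:
  assumes D: "D \<in> dis_class A Dm" and Dm: "0 < Dm"
  shows "ln Dm \<le> ln (D y)" "ln (D y) \<le> 0" "ln Dm \<le> ln (1 - D y)" "ln (1 - D y) \<le> 0"
proof -
  have "(0::real^'d) \<in> cube" by (simp add: cube_def)
  then have "ln Dm \<le> 0" using D Dm unfolding dis_class_def by (force simp: ln_le_zero_iff)
  moreover have "Dm \<le> D y \<and> Dm \<le> 1 - D y \<and> 0 \<le> D y \<and> D y \<le> 1" if "y \<in> cube"
    using D that unfolding dis_class_def by auto
  moreover have "D y = 0" if "y \<notin> cube" using D that unfolding dis_class_def by auto
  ultimately show "ln Dm \<le> ln (D y)" "ln (D y) \<le> 0" "ln Dm \<le> ln (1 - D y)" "ln (1 - D y) \<le> 0"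
    using Dm by (cases "y \<in> cube"; simp)+
qed

lemma L_hat_bounds:
  assumes "D \<in> dis_class A Dm" "0 < Dm"
  shows "ln Dm \<le> L_hat Y Z n G D \<omega>" "L_hat Y Z n G D \<omega> \<le> 0"
proof -
  have "L_hat Y Z n G D \<omega> =
      ((\<Sum>i=1..n. ln (D (Y i \<omega>))) / real n + (\<Sum>i=1..n. ln (1 - D (G (Z i \<omega>)))) / real n) / 2"
    unfolding L_hat_def by (simp add: field_simps)
  moreover note average_bounds[of "ln Dm" "\<lambda>i. ln (D (Y i \<omega>))" n]
    average_bounds[of "ln Dm" "\<lambda>i. ln (1 - D (G (Z i \<omega>)))" n]
  ultimately show "ln Dm \<le> L_hat Y Z n G D \<omega>" "L_hat Y Z n G D \<omega> \<le> 0"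
    using ln_discriminator_bounds[OF assms] by simp_all
qed

lemma P_hat_eq_sum_convexity_defect:
  "P_hat m U U' \<kappa> n \<phi> \<omega>
     = 1 / real (m n) * (\<Sum>j=1..m n. relu (convexity_defect \<kappa> \<phi> (U j \<omega>) (U' j \<omega>)))"
  unfolding P_hat_def convexity_defect_def ..

lemma P_hat_eq_zero:
  fixes \<phi> :: "real^'d::finite \<Rightarrow> real"
  assumes "strongly_convex \<kappa> \<phi>" "\<And>j. U j \<omega> \<in> cube" "\<And>j. U' j \<omega> \<in> cube"
  shows "P_hat m U U' \<kappa> n \<phi> \<omega> = 0"
  using assms unfolding P_hat_eq_sum_convexity_defect strongly_convex_iff_convexity_defect
  by (simp add: relu_def)

lemma P_hat_ge:
  fixes \<phi> :: "real^'d::finite \<Rightarrow> real"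
  assumes defect: "\<And>p q. p \<in> A \<Longrightarrow> q \<in> B \<Longrightarrow> c \<le> convexity_defect \<kappa> \<phi> p q" and c: "0 \<le> c"
    and freq: "real (m n) * \<pi> / 2
      < (\<Sum>j\<in>{1..m n}. indicator A (U j \<omega>) * indicator B (U' j \<omega>) :: real)"
  shows "c * \<pi> / 2 \<le> P_hat m U U' \<kappa> n \<phi> \<omega>"
proof -
  have m: "0 < real (m n)" using freq by (cases "m n = 0") auto
  have "c * (real (m n) * \<pi> / 2) \<le> c * (\<Sum>j\<in>{1..m n}. indicator A (U j \<omega>) * indicator B (U' j \<omega>))"
    using freq c by (intro mult_left_mono) auto
  also have "\<dots> \<le> (\<Sum>j=1..m n. relu (convexity_defect \<kappa> \<phi> (U j \<omega>) (U' j \<omega>)))"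
    unfolding sum_distrib_left
    using defect c
    by (intro sum_mono) (auto simp: relu_def indicator_def intro: le_max_iff_disj[THEN iffD2])
  finally show ?thesis using m unfolding P_hat_eq_sum_convexity_defect by (simp add: field_simps)
qed

lemma INF_SUP_eq_if_dominated:
  fixes F :: "'a \<Rightarrow> 'b \<Rightarrow> real"
  assumes "S' \<subseteq> S" "x0 \<in> S'"
    and dominated: "\<And>x y. x \<in> S \<Longrightarrow> x \<notin> S' \<Longrightarrow> y \<in> T \<Longrightarrow> F x0 y \<le> F x y"
  shows "(INF x\<in>S. SUP y\<in>T. ereal (F x y)) = (INF x\<in>S'. SUP y\<in>T. ereal (F x y))"
proof (rule antisym)
  show "(INF x\<in>S'. SUP y\<in>T. ereal (F x y)) \<le> (INF x\<in>S. SUP y\<in>T. ereal (F x y))"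
  proof (rule INF_greatest)
    fix x assume x: "x \<in> S"
    show "(INF x\<in>S'. SUP y\<in>T. ereal (F x y)) \<le> (SUP y\<in>T. ereal (F x y))"
    proof (cases "x \<in> S'")
      case False
      have "(INF x\<in>S'. SUP y\<in>T. ereal (F x y)) \<le> (SUP y\<in>T. ereal (F x0 y))"
        using assms(2) by (rule INF_lower)
      also have "\<dots> \<le> (SUP y\<in>T. ereal (F x y))"
        using dominated[OF x False] by (intro SUP_mono) auto
      finally show ?thesis .
    qed (rule INF_lower)
  qed
qed (rule INF_superset_mono[OF assms(1) order.refl])

lemma eventually_penalized_INF_SUP_eq:
  fixes S S' :: "(real^'d::finite \<Rightarrow> real) set"
  assumes sub: "S' \<subseteq> S" and \<phi>0: "\<phi>0 \<in> S'" "strongly_convex \<kappa> \<phi>0"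
    and cube: "\<forall>j. U j \<omega> \<in> cube \<and> U' j \<omega> \<in> cube"
    and dis: "T \<subseteq> dis_class A Dm" "0 < Dm"
    and boxes: "\<And>\<phi>. \<phi> \<in> S \<Longrightarrow> \<phi> \<notin> S' \<Longrightarrow> \<exists>a\<in>grid N. \<exists>b\<in>grid N.
          \<forall>p\<in>grid_box N a. \<forall>q\<in>grid_box N b. c \<le> convexity_defect \<kappa> \<phi> p q"
    and c: "0 \<le> c" and \<gamma>: "- ln Dm \<le> \<gamma> * (c * \<pi> / 2)" "0 \<le> \<gamma>"
    and m: "filterlim m at_top sequentially"
    and freq: "\<forall>a\<in>grid N. \<forall>b\<in>grid N. \<forall>\<^sub>F k in sequentially. real k * \<pi> / 2
          < (\<Sum>j\<in>{1..k}. indicator (grid_box N a) (U j \<omega>) * indicator (grid_box N b) (U' j \<omega>))"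
  shows "\<forall>\<^sub>F n in sequentially.
     (INF \<phi>\<in>S. SUP D\<in>T. ereal (L_hat Y Z n (grad \<phi>) D \<omega> + \<gamma> * P_hat m U U' \<kappa> n \<phi> \<omega>))
   = (INF \<phi>\<in>S'. SUP D\<in>T. ereal (L_hat Y Z n (grad \<phi>) D \<omega> + \<gamma> * P_hat m U U' \<kappa> n \<phi> \<omega>))"
proof -
  have P0: "P_hat m U U' \<kappa> n \<phi>0 \<omega> = 0" for n
    using cube by (intro P_hat_eq_zero[OF \<phi>0(2)]) auto
  have dominated: "L_hat Y Z n (grad \<phi>0) D \<omega> + \<gamma> * P_hat m U U' \<kappa> n \<phi>0 \<omega>
      \<le> L_hat Y Z n (grad \<phi>) D \<omega> + \<gamma> * P_hat m U U' \<kappa> n \<phi> \<omega>"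
    if freq_n: "\<forall>a\<in>grid N. \<forall>b\<in>grid N. real (m n) * \<pi> / 2
         < (\<Sum>j\<in>{1..m n}. indicator (grid_box N a) (U j \<omega>) * indicator (grid_box N b) (U' j \<omega>))"
      and \<phi>: "\<phi> \<in> S" "\<phi> \<notin> S'" and D: "D \<in> T" for n \<phi> D
  proof -
    obtain a b where "a \<in> grid N" "b \<in> grid N"
      and defect: "\<forall>p\<in>grid_box N a. \<forall>q\<in>grid_box N b. c \<le> convexity_defect \<kappa> \<phi> p q"
      using boxes[OF \<phi>] by blast
    then have "c * \<pi> / 2 \<le> P_hat m U U' \<kappa> n \<phi> \<omega>"
      using freq_n c by (intro P_hat_ge[where A="grid_box N a" and B="grid_box N b"]) auto
    then have "- ln Dm \<le> \<gamma> * P_hat m U U' \<kappa> n \<phi> \<omega>"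
      using \<gamma> mult_left_mono by (meson order_trans)
    moreover have "D \<in> dis_class A Dm" using D dis(1) by blast
    note L_hat_bounds(2)[OF this dis(2), of Y Z n "grad \<phi>0" \<omega>]
      L_hat_bounds(1)[OF this dis(2), of Y Z n "grad \<phi>" \<omega>]
    ultimately show ?thesis using P0 by (simp; linarith)
  qed
  have "\<forall>\<^sub>F k in sequentially. \<forall>a\<in>grid N. \<forall>b\<in>grid N. real k * \<pi> / 2
      < (\<Sum>j\<in>{1..k}. indicator (grid_box N a) (U j \<omega>) * indicator (grid_box N b) (U' j \<omega>))"
    using freq by (simp add: eventually_ball_finite_distrib finite_grid)
  from eventually_compose_filterlim[OF this m] show ?thesis
    by (rule eventually_mono) (rule INF_SUP_eq_if_dominated[OF sub \<phi>0(1)], rule dominated)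
qed

theorem proposition8:
  fixes M :: "'w measure"
    and pstar :: "real^'d::finite \<Rightarrow> real" and \<alpha> :: real
    and phistar :: "real^'d \<Rightarrow> real" and Mc :: real
    and phi_eps :: "real \<Rightarrow> real^'d \<Rightarrow> real" and A_phi :: "real \<Rightarrow> nat list"
    and Ht :: "real \<Rightarrow> real"
    and A_D :: "real \<Rightarrow> nat list" and Dmin :: "real \<Rightarrow> real"
    and H_dis :: "real \<Rightarrow> (real^'d \<Rightarrow> real) set"
    and m :: "nat \<Rightarrow> nat"
    and Y Z U U' :: "nat \<Rightarrow> 'w \<Rightarrow> real^'d"
    and \<epsilon> \<eta> :: real
  defines "mustar \<equiv> density lborel (\<lambda>x. ennreal (pstar x))"
    and "\<beta> \<equiv> 1 / Mc"
  assumes M_prob: "prob_space M"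
    \<comment> \<open>samples\<close>
    and Y_indep: "prob_space.indep_vars M (\<lambda>_. borel) Y UNIV"
    and Y_law: "\<And>i. distr M borel (Y i) = mustar"
    and Z_indep: "prob_space.indep_vars M (\<lambda>_. borel) Z UNIV"
    and Z_law: "\<And>i. distr M borel (Z i) = lam"
    and UU_indep: "prob_space.indep_vars M (\<lambda>_. borel)
                     (\<lambda>k. case k of Inl j \<Rightarrow> U j | Inr j \<Rightarrow> U' j) UNIV"
    and U_law: "\<And>j. distr M borel (U j) = lam"
    and U'_law: "\<And>j. distr M borel (U' j) = lam"
    and m_mono: "mono m" and m_lim: "filterlim m at_top sequentially"
    \<comment> \<open>(P): target density\<close>
    and pstar_meas: "pstar \<in> borel_measurable lborel"
    and mustar_prob: "prob_space mustar"
    and pstar_pos: "\<And>x. x \<in> cube \<Longrightarrow> pstar x > 0"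
    and pstar_zero: "\<And>x. x \<notin> cube \<Longrightarrow> pstar x = 0"
    and alpha: "0 < \<alpha>" "\<alpha> < 1"
    and pstar_reg: "Ck_alpha 1 \<alpha> pstar"
    \<comment> \<open>(P): Brenier potential\<close>
    and phistar_reg: "Ck_alpha 3 \<alpha> phistar"
    and phistar_convex: "convex_on cube phistar"
    and phistar_push: "pushfwd (grad phistar) = mustar"
    and Mc_gt: "1 < Mc"
    and phistar_hess: "hess_between (1 / Mc) Mc phistar"
    \<comment> \<open>(P): approximating ReCU potentials and potential classes\<close>
    and phi_eps_net: "\<And>e. e > 0 \<Longrightarrow> is_network_on UNIV recu (A_phi e) (phi_eps e)"
    and phi_eps_hess: "\<And>e. e > 0 \<Longrightarrow> hess_between (1 / (2 * Mc)) (2 * Mc) (phi_eps e)"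
    and phi_eps_js: "\<And>e. e > 0 \<Longrightarrow> d_JS mustar (pushfwd (grad (phi_eps e))) \<le> e"
    and Ht_ge: "\<And>e. e > 0 \<Longrightarrow> ck_norm 2 1 (phi_eps e) \<le> ennreal (Ht e)"
    \<comment> \<open>(D'): discriminator classes\<close>
    and Dmin_range: "\<And>e. e > 0 \<Longrightarrow> 0 < Dmin e \<and> Dmin e < 1 / 2"
    and H_dis_sub: "\<And>e. e > 0 \<Longrightarrow> H_dis e \<subseteq> dis_class (A_D e) (Dmin e)"
    and H_dis_cpt: "\<And>e. e > 0 \<Longrightarrow> rel_compact_sup (H_dis e)"
    and H_dis_approx: "\<And>e \<phi>. e > 0 \<Longrightarrow> \<phi> \<in> H_pot_sc (\<beta> / 2) (A_phi e) (Ht e) \<Longrightarrow>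
         \<exists>D \<in> H_dis e. \<forall>p. p \<in> borel_measurable borel \<longrightarrow> (\<forall>x. 0 \<le> p x) \<longrightarrow>
            pushfwd (grad \<phi>) = density lborel (\<lambda>x. ennreal (p x)) \<longrightarrow>
            L_gan mustar (grad \<phi>) (D_opt pstar p) - L_gan mustar (grad \<phi>) D \<le> e"
    \<comment> \<open>parameters\<close>
    and eps_pos: "\<epsilon> > 0"
    and eta: "0 < \<eta>" "\<eta> < \<beta> / 2"
  shows "\<exists>\<gamma> > 0. AE \<omega> in M. \<exists>nbar. \<forall>n \<ge> nbar.
     (INF \<phi> \<in> H_pot (A_phi \<epsilon>) (Ht \<epsilon>). SUP D \<in> H_dis \<epsilon>.
        ereal (L_hat Y Z n (grad \<phi>) D \<omega> + \<gamma> * P_hat m U U' (\<beta> / 2) n \<phi> \<omega>))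
   = (INF \<phi> \<in> H_pot_sc (\<beta> / 2 - \<eta>) (A_phi \<epsilon>) (Ht \<epsilon>). SUP D \<in> H_dis \<epsilon>.
        ereal (L_hat Y Z n (grad \<phi>) D \<omega> + \<gamma> * P_hat m U U' (\<beta> / 2) n \<phi> \<omega>))"
proof -
  interpret prob_space M by (rule M_prob)
  have \<beta>: "0 < \<beta>" "\<beta> \<le> 1" unfolding \<beta>_def using Mc_gt by auto
  obtain N c where N: "1 \<le> N" and c: "0 < c"
    and boxes: "\<And>\<phi> :: real^'d \<Rightarrow> real. \<phi> \<in> H_pot (A_phi \<epsilon>) (Ht \<epsilon>) \<Longrightarrow>
      \<phi> \<notin> H_pot_sc (\<beta> / 2 - \<eta>) (A_phi \<epsilon>) (Ht \<epsilon>) \<Longrightarrow> \<exists>a\<in>grid N. \<exists>b\<in>grid N.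
        \<forall>p\<in>grid_box N a. \<forall>q\<in>grid_box N b. c \<le> convexity_defect (\<beta> / 2) \<phi> p q"
    by (rule H_pot_defect_on_grid_boxes[of "\<beta> / 2 - \<eta>" \<eta>, unfolded diff_add_cancel])
       (use eta \<beta> in auto)
  define \<pi> where "\<pi> = (1 / real N) ^ (2 * CARD('d))"
  define \<gamma> where "\<gamma> = (1 + \<bar>ln (Dmin \<epsilon>)\<bar>) / (c * \<pi> / 2)"
  have \<gamma>: "0 < \<gamma>" "- ln (Dmin \<epsilon>) \<le> \<gamma> * (c * \<pi> / 2)" unfolding \<gamma>_def \<pi>_def using c N by auto
  have "strongly_convex (1 / (2 * Mc)) (phi_eps \<epsilon>)"
    using twice_differentiable_recu_network[OF phi_eps_net] phi_eps_hess eps_pos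
    by (intro hess_between_imp_strongly_convex)
  then have sc: "strongly_convex (\<beta> / 2) (phi_eps \<epsilon>)" by (simp add: \<beta>_def mult.commute)
  then have \<phi>0: "phi_eps \<epsilon> \<in> H_pot_sc (\<beta> / 2 - \<eta>) (A_phi \<epsilon>) (Ht \<epsilon>)"
    using strongly_convex_mono[OF sc] phi_eps_net Ht_ge eps_pos eta
    by (auto simp: H_pot_sc_def H_pot_def)
  have sub: "H_pot_sc (\<beta> / 2 - \<eta>) (A_phi \<epsilon>) (Ht \<epsilon>) \<subseteq> H_pot (A_phi \<epsilon>) (Ht \<epsilon>)"
    unfolding H_pot_sc_def by blast
  note eventually_eq =
    eventually_penalized_INF_SUP_eq[OF sub \<phi>0 sc _ H_dis_sub[OF eps_pos] _ boxes _ \<gamma>(2) _ m_lim]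
  show ?thesis
    unfolding eventually_sequentially[symmetric]
    using AE_pair_samples_in_cube[OF UU_indep U_law U'_law]
      AE_eventually_grid_box_pair_frequency[OF UU_indep U_law U'_law N, folded \<pi>_def]
    by (intro exI[of _ \<gamma>] conjI \<gamma>(1))
       (elim AE_mp, intro AE_I2 impI eventually_eq, use c \<gamma> Dmin_range[OF eps_pos] in auto)
qed

end
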